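(* Let $i\geq1$ and let $T$ be an SSRT of straight partition shape $\lambda$ such that $\lambda$ has an addable node in column $i+1$. Then $\phi_{i+1}(\rho^{-1}(T))=\rho^{-1}(\mathrm{tjdt}_{i+1}(T))$; in particular $\phi_{i+1}(\rho^{-1}(T))$ is an SSRCT.
   Context: SSRTs (French convention, rows numbered from bottom, box $(r,c)$ = row $r$, column $c$): fillings of a partition shape by positive integers weakly decreasing along rows left to right and strictly decreasing up columns. For an SSRT $T$ of shape $\lambda$ with an addable node in column $i+1$, set $T_{(p,q)}=0$ if $(p,q)\notin\lambda$ and $T_{(0,q)}=\infty$; let $r$ be the largest integer such that $(r,i)\in\lambda$ and $T_{(r,i)}<T_{(r-1,i+1)}$ (this is the first entry that moves horizontally during a backward jeu de taquin slide from the addable node in column $i+1$). Then $\mathrm{tjdt}_{i+1}(T)$ is obtained from $T$ by removing the entry $T_{(r,i)}$ and sliding every entry of column $i$ above it down by one row, leaving all other entries unchanged. SSRCTs: compositions drawn as reverse composition diagrams (row $r$ from the top has $\alpha_r$ left-justified boxes). An SSRCT of shape $\alpha$ is a filling by positive integers with (1) rows weakly decreasing left to right, (2) first column strictly increasing top to bottom, (3) for rows $r<s$ and column $c$ with $(s,c+1)\in\alpha$: if $(r,c)\in\alpha$ and $\tau(r,c)\geq\tau(s,c+1)$ then $(r,c+1)\in\alpha$ and $\tau(r,c+1)>\tau(s,c+1)$. The map $\rho$ sends an SSRCT to the SSRT obtained by writing the entries of each column in decreasing order from bottom to top, bottom-justified; it is a known bijection between SSRCTs and SSRTs of straight shape.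 $\phi_{i+1}$: for an SSRCT $\tau$ of shape $\alpha$ with a part equal to $i$ (set $\tau(r,c)=0$ outside $\alpha$), let $r_1$ be the largest index with $\alpha_{r_1}=i$, and for $j\geq2$ let $r_j$ be the largest $r<r_{j-1}$ with $\tau(r,i)>\tau(r_{j-1},i)\geq\tau(r,i+1)$, ending with $r_k$. Then $\phi_{i+1}(\tau)$ is obtained by placing, for $j=k,\ldots,2$, the original entry $\tau(r_{j-1},i)$ into box $(r_j,i)$, and deleting box $(r_1,i)$ (and the row, if empty); the entry $\tau(r_k,i)$ exits. *)

theory Defs
  imports Main
begin

text \<open>For SSRTs (French convention) the first list element
is the bottom row (row 1); for SSRCTs (reverse composition diagrams) the first list element
is the top row (row 1). Rows and columns are numbered from 1. Entries outside the diagram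
are read as 0.\<close>

type_synonym tableau = "nat list list"

definition in_diag :: "tableau \<Rightarrow> nat \<Rightarrow> nat \<Rightarrow> bool" where
  "in_diag T r c \<longleftrightarrow> 1 \<le> r \<and> r \<le> length T \<and> 1 \<le> c \<and> c \<le> length (T ! (r - 1))"

definition ent :: "tableau \<Rightarrow> nat \<Rightarrow> nat \<Rightarrow> nat" where
  "ent T r c = (if in_diag T r c then T ! (r - 1) ! (c - 1) else 0)"

definition is_SSRT :: "tableau \<Rightarrow> bool" where
  "is_SSRT T \<longleftrightarrow>
     (\<forall>row\<in>set T. row \<noteq> []) \<and> sorted_wrt (\<ge>) (map length T) \<and>
     (\<forall>row\<in>set T. \<forall>x\<in>set row. 0 < x) \<and>
     (\<forall>r c. 1 \<le> c \<and> in_diag T r (c + 1) \<longrightarrow> ent T r (c + 1) \<le> ent T r c) \<and>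
     (\<forall>r c. 1 \<le> r \<and> in_diag T (r + 1) c \<longrightarrow> ent T (r + 1) c < ent T r c)"

definition addable_node :: "tableau \<Rightarrow> nat \<Rightarrow> nat \<Rightarrow> bool" where
  "addable_node T r c \<longleftrightarrow> 1 \<le> r \<and> 1 \<le> c \<and> \<not> in_diag T r c \<and>
     (c = 1 \<or> in_diag T r (c - 1)) \<and> (r = 1 \<or> in_diag T (r - 1) c)"

definition has_addable_in_col :: "tableau \<Rightarrow> nat \<Rightarrow> bool" where
  "has_addable_in_col T c \<longleftrightarrow> (\<exists>r. addable_node T r c)"

definition col_len :: "tableau \<Rightarrow> nat \<Rightarrow> nat" where
  "col_len T c = length (filter (\<lambda>row. c \<le> length row) T)"

text \<open>The row \<open>r\<close> of the entry that first moves horizontally: largest \<open>r\<close> with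
  \<open>(r,i) \<in> \<lambda>\<close> and \<open>T(r,i) < T(r-1,i+1)\<close>, where \<open>T(0,i+1) = \<infinity>\<close>.\<close>
definition tjdt_row :: "nat \<Rightarrow> tableau \<Rightarrow> nat" where
  "tjdt_row k T = (GREATEST r. in_diag T r (k - 1) \<and>
                     (r = 1 \<or> ent T r (k - 1) < ent T (r - 1) k))"

text \<open>\<open>tjdt k T\<close> (with \<open>k = i + 1\<close>): remove \<open>T(r,i)\<close> and slide every entry of column \<open>i\<close>
  above it down by one row; the top box of column \<open>i\<close> disappears (and its row, if empty).\<close>
definition tjdt :: "nat \<Rightarrow> tableau \<Rightarrow> tableau" where
  "tjdt k T = (let c = k - 1; r0 = tjdt_row k T; h = col_len T c in
     filter (\<lambda>row. row \<noteq> [])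
       (map (\<lambda>p. let row = T ! (p - 1) in
                  if p < r0 then row
                  else if p < h then row[c - 1 := ent T (p + 1) c]
                  else if p = h then take (c - 1) row
                  else row) [1..<length T + 1]))"

definition is_SSRCT :: "tableau \<Rightarrow> bool" where
  "is_SSRCT \<tau> \<longleftrightarrow>
     (\<forall>row\<in>set \<tau>. row \<noteq> []) \<and>
     (\<forall>row\<in>set \<tau>. \<forall>x\<in>set row. 0 < x) \<and>
     (\<forall>r c. 1 \<le> c \<and> in_diag \<tau> r (c + 1) \<longrightarrow> ent \<tau> r (c + 1) \<le> ent \<tau> r c) \<and>
     (\<forall>r. 1 \<le> r \<and> r < length \<tau> \<longrightarrow> ent \<tau> r 1 < ent \<tau> (r + 1) 1) \<and>
     (\<forall>r s c. 1 \<le> c \<and> r < s \<and> in_diag \<tau> s (c + 1) \<and> in_diag \<tau> r c \<and>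
        ent \<tau> s (c + 1) \<le> ent \<tau> r c \<longrightarrow>
        in_diag \<tau> r (c + 1) \<and> ent \<tau> s (c + 1) < ent \<tau> r (c + 1))"

text \<open>The map \<open>\<rho>\<close>: entries of each column written in decreasing order from bottom to top,
  bottom-justified.\<close>
definition col_entries :: "tableau \<Rightarrow> nat \<Rightarrow> nat list" where
  "col_entries \<tau> c = [ent \<tau> r c. r \<leftarrow> [1..<length \<tau> + 1], in_diag \<tau> r c]"

definition col_sorted :: "tableau \<Rightarrow> nat \<Rightarrow> nat list" where
  "col_sorted \<tau> c = rev (sort (col_entries \<tau> c))"

definition rho :: "tableau \<Rightarrow> tableau" where
  "rho \<tau> = (let m = foldr max (map length \<tau>) 0 in
     map (\<lambda>r. map (\<lambda>c. col_sorted \<tau> c ! (r - 1))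
                   (filter (\<lambda>c. r \<le> length (col_sorted \<tau> c)) [1..<m + 1]))
         [1..<length \<tau> + 1])"

fun find_down :: "(nat \<Rightarrow> bool) \<Rightarrow> nat \<Rightarrow> nat option" where
  "find_down P 0 = None"
| "find_down P (Suc n) = (if P n then Some n else find_down P n)"

lemma find_down_less: "find_down P n = Some m \<Longrightarrow> m < n"
  by (induction n) (auto split: if_splits)

definition phi_cond :: "tableau \<Rightarrow> nat \<Rightarrow> nat \<Rightarrow> nat \<Rightarrow> bool" where
  "phi_cond \<tau> i rp r \<longleftrightarrow> 1 \<le> r \<and> ent \<tau> r i > ent \<tau> rp i \<and> ent \<tau> rp i \<ge> ent \<tau> r (i + 1)"

text \<open>\<open>phi_chain \<tau> i r\<^sub>1 = [r\<^sub>1, r\<^sub>2, ..., r\<^sub>k]\<close>: \<open>r\<^sub>j\<close> is the largest \<open>r < r\<^sub>j\<^sub>-\<^sub>1\<close> with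
  \<open>\<tau>(r,i) > \<tau>(r\<^sub>j\<^sub>-\<^sub>1,i) \<ge> \<tau>(r,i+1)\<close>.\<close>
function phi_chain :: "tableau \<Rightarrow> nat \<Rightarrow> nat \<Rightarrow> nat list" where
  "phi_chain \<tau> i r = (case find_down (phi_cond \<tau> i r) r of
       None \<Rightarrow> [r]
     | Some r' \<Rightarrow> r # phi_chain \<tau> i r')"
  by pat_completeness auto
termination
  by (relation "measure (\<lambda>(\<tau>, i, r). r)") (auto dest: find_down_less)

definition phi :: "nat \<Rightarrow> tableau \<Rightarrow> tableau" where
  "phi k \<tau> = (let i = k - 1;
       r1 = Max {r. 1 \<le> r \<and> r \<le> length \<tau> \<and> length (\<tau> ! (r - 1)) = i};
       cs = phi_chain \<tau> i r1 in
     filter (\<lambda>row. row \<noteq> [])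
       (map (\<lambda>p. let row = \<tau> ! (p - 1) in
                 if p = r1 then take (i - 1) row
                 else (case map_of (zip (tl cs) cs) p of
                         Some q \<Rightarrow> row[i - 1 := ent \<tau> q i]
                       | None \<Rightarrow> row)) [1..<length \<tau> + 1]))"

end

theory Submission
  imports Defs "HOL-Library.Multiset"
begin

text \<open>
  Write \<open>a r\<close>, \<open>b r\<close> for the entries \<open>\<tau>(r,i)\<close>, \<open>\<tau>(r,i+1)\<close> and say that row \<open>r\<close>
  covers \<open>v\<close> if \<open>b r \<le> v < a r\<close>. The chain \<open>r\<^sub>1 > \<dots> > r\<^sub>k\<close> of \<open>\<phi>\<^sub>i\<^sub>+\<^sub>1\<close> is built by
  letting \<open>r\<^sub>j\<close> be the nearest row above \<open>r\<^sub>j\<^sub>-\<^sub>1\<close> covering \<open>a r\<^sub>j\<^sub>-\<^sub>1\<close>; \<open>\<phi>\<^sub>i\<^sub>+\<^sub>1\<close>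
  shifts the entries \<open>a r\<^sub>1 < \<dots> < a r\<^sub>k\<^sub>-\<^sub>1\<close> one step up the chain and drops \<open>x = a r\<^sub>k\<close>.
  The triple rule shows that no row at all covers \<open>x\<close>, while every \<open>v < x\<close> is covered; it
  also shows that the shifted filling is again an SSRCT.

  Since \<open>\<rho>\<close> only remembers the multiset of each column, \<open>\<rho>(\<phi>\<^sub>i\<^sub>+\<^sub>1 \<tau>)\<close> is \<open>\<rho> \<tau>\<close> with
  \<open>x\<close> removed from column \<open>i\<close>. In \<open>\<rho> \<tau>\<close>, fewer entries of column \<open>i+1\<close> than of column
  \<open>i\<close> exceed \<open>v\<close> exactly when some row of \<open>\<tau>\<close> covers \<open>v\<close>. Hence \<open>x\<close> is the highest entry
  of column \<open>i\<close> of \<open>\<rho> \<tau>\<close> that is smaller than its lower right neighbour, which is the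
  entry that \<open>tjdt\<^sub>i\<^sub>+\<^sub>1\<close> removes.
\<close>

declare upt_Suc[simp del]

lemma ent_outside[simp]: "\<not> in_diag X r c \<Longrightarrow> ent X r c = 0"
  by (simp add: ent_def)

lemma tableau_eqI:
  assumes len: "length A = length B"
    and cells: "\<And>r c. in_diag A r c = in_diag B r c"
    and entries: "\<And>r c. ent A r c = ent B r c"
  shows "A = B"
proof (rule nth_equalityI[OF len])
  fix k assume k: "k < length A"
  have L: "length (A!k) = length (B!k)"
  proof (rule ccontr)
    assume ne: "length (A!k) \<noteq> length (B!k)"
    show False
    proof (cases "length (A!k) < length (B!k)")
      case True
      have "in_diag B (Suc k) (length (B!k))" using True k len by (simp add: in_diag_def)
      moreover have "\<not> in_diag A (Suc k) (length (B!k))" using True by (simp add: in_diag_def)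
      ultimately show False using cells by blast
    next
      case False
      hence "length (B!k) < length (A!k)" using ne by simp
      hence "in_diag A (Suc k) (length (A!k)) \<and> \<not> in_diag B (Suc k) (length (A!k))"
        using k len by (simp add: in_diag_def)
      thus False using cells by blast
    qed
  qed
  show "A!k = B!k"
  proof (rule nth_equalityI[OF L])
    fix j assume j: "j < length (A!k)"
    have "in_diag A (Suc k) (Suc j)" "in_diag B (Suc k) (Suc j)" using j k len L by (simp_all add: in_diag_def)
    thus "A!k!j = B!k!j" using entries[of "Suc k" "Suc j"] by (simp add: ent_def)
  qed
qed

lemma filter_nonempty_rows_id:
  "(\<And>k. k < length X \<Longrightarrow> X ! k \<noteq> []) \<Longrightarrow> filter (\<lambda>row. row \<noteq> []) X = X"
  by (rule filter_True) (auto simp: in_set_conv_nth)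

definition delete_row :: "nat \<Rightarrow> tableau \<Rightarrow> tableau" where
  "delete_row e X = take (e - 1) X @ drop e X"

text \<open>Row \<open>r\<close> of \<open>delete_row e X\<close> is row \<open>orig_row e r\<close> of \<open>X\<close>.\<close>
definition orig_row :: "nat \<Rightarrow> nat \<Rightarrow> nat" where
  "orig_row e r = (if r < e then r else Suc r)"

lemma orig_row_strict_mono: "r < s \<Longrightarrow> orig_row e r < orig_row e s"
  by (simp add: orig_row_def)

lemma filter_nonempty_rows_single_empty:
  assumes e: "1 \<le> e" "e \<le> length X" and empty: "X ! (e - 1) = []"
    and nonempty: "\<And>k. k < length X \<Longrightarrow> k \<noteq> e - 1 \<Longrightarrow> X ! k \<noteq> []"
  shows "filter (\<lambda>row. row \<noteq> []) X = delete_row e X"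
proof -
  have X: "X = take (e - 1) X @ [X ! (e - 1)] @ drop e X"
    using e id_take_nth_drop[of "e - 1" X] by simp
  have "\<forall>row\<in>set (take (e - 1) X). row \<noteq> []"
    using nonempty by (auto simp: in_set_conv_nth)
  moreover have "\<forall>row\<in>set (drop e X). row \<noteq> []"
    using nonempty e by (fastforce simp: in_set_conv_nth)
  ultimately have "filter (\<lambda>row. row \<noteq> []) (take (e - 1) X @ [X ! (e - 1)] @ drop e X)
      = delete_row e X"
    using empty by (simp add: delete_row_def)
  thus ?thesis by (simp only: X[symmetric])
qed

lemma length_delete_row: "1 \<le> e \<Longrightarrow> e \<le> length X \<Longrightarrow> length (delete_row e X) = length X - 1"
  by (simp add: delete_row_def)

lemma
  assumes "1 \<le> e" "e \<le> length X" "1 \<le> r"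
  shows in_diag_delete_row: "in_diag (delete_row e X) r c = in_diag X (orig_row e r) c"
    and ent_delete_row: "ent (delete_row e X) r c = ent X (orig_row e r) c"
proof -
  have len: "length (delete_row e X) = length X - 1"
    using assms by (simp add: delete_row_def)
  have nth: "delete_row e X ! k = X ! (if k < e - 1 then k else Suc k)"
    if "k < length (delete_row e X)" for k
    using assms that by (auto simp: delete_row_def nth_append min_def)
  show cell: "in_diag (delete_row e X) r c = in_diag X (orig_row e r) c"
    using assms len nth[of "r - 1"] by (auto simp: in_diag_def orig_row_def)
  show "ent (delete_row e X) r c = ent X (orig_row e r) c"
    using assms len nth[of "r - 1"] cell by (auto simp: ent_def in_diag_def orig_row_def)
qed

section \<open>Semistandard reverse composition tableaux\<close>

lemma is_SSRCT_I:
  assumes "\<And>r. 1 \<le> r \<Longrightarrow> r \<le> length X \<Longrightarrow> in_diag X r 1"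
    and "\<And>r c. in_diag X r c \<Longrightarrow> 0 < ent X r c"
    and "\<And>r c. 1 \<le> c \<Longrightarrow> in_diag X r (Suc c) \<Longrightarrow> ent X r (Suc c) \<le> ent X r c"
    and "\<And>r. 1 \<le> r \<Longrightarrow> r < length X \<Longrightarrow> ent X r 1 < ent X (Suc r) 1"
    and "\<And>r s c. 1 \<le> c \<Longrightarrow> r < s \<Longrightarrow> in_diag X s (Suc c) \<Longrightarrow> in_diag X r c \<Longrightarrow>
        ent X s (Suc c) \<le> ent X r c \<Longrightarrow> in_diag X r (Suc c) \<and> ent X s (Suc c) < ent X r (Suc c)"
  shows "is_SSRCT X"
proof -
  have "\<forall>row\<in>set X. row \<noteq> []"
  proof
    fix row assume "row \<in> set X"
    then obtain k where k: "k < length X" "row = X ! k" by (auto simp: in_set_conv_nth)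
    thus "row \<noteq> []" using assms(1)[of "Suc k"] by (auto simp: in_diag_def)
  qed
  moreover have "\<forall>row\<in>set X. \<forall>x\<in>set row. 0 < x"
  proof (intro ballI)
    fix row y assume "row \<in> set X" "y \<in> set row"
    then obtain k j where k: "k < length X" "row = X ! k" "j < length row" "y = row ! j"
      by (auto simp: in_set_conv_nth)
    hence "in_diag X (Suc k) (Suc j)" by (simp add: in_diag_def)
    thus "0 < y" using assms(2)[of "Suc k" "Suc j"] k by (simp add: ent_def)
  qed
  moreover have "\<forall>r s c. 1 \<le> c \<and> r < s \<and> in_diag X s (c + 1) \<and> in_diag X r c \<and>
        ent X s (c + 1) \<le> ent X r c \<longrightarrow> in_diag X r (c + 1) \<and> ent X s (c + 1) < ent X r (c + 1)"
  proof (intro allI impI)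
    fix r s c
    assume "1 \<le> c \<and> r < s \<and> in_diag X s (c + 1) \<and> in_diag X r c \<and> ent X s (c + 1) \<le> ent X r c"
    thus "in_diag X r (c + 1) \<and> ent X s (c + 1) < ent X r (c + 1)" using assms(5)[of c r s] by simp
  qed
  moreover have "\<forall>r c. 1 \<le> c \<and> in_diag X r (c + 1) \<longrightarrow> ent X r (c + 1) \<le> ent X r c"
    using assms(3) by simp
  moreover have "\<forall>r. 1 \<le> r \<and> r < length X \<longrightarrow> ent X r 1 < ent X (r + 1) 1"
    using assms(4) by simp
  ultimately show ?thesis unfolding is_SSRCT_def by blast
qed

context
  fixes X :: tableau
  assumes SSRCT: "is_SSRCT X"
begin

lemma SSRCT_row_decreasing:
  "in_diag X r (Suc c) \<Longrightarrow> 1 \<le> c \<Longrightarrow> ent X r (Suc c) \<le> ent X r c"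
  using SSRCT[unfolded is_SSRCT_def, THEN conjunct2, THEN conjunct2, THEN conjunct1, rule_format, of c r]
  by simp

lemma SSRCT_first_col_step:
  "1 \<le> r \<Longrightarrow> r < length X \<Longrightarrow> ent X r 1 < ent X (Suc r) 1"
  using SSRCT[unfolded is_SSRCT_def, THEN conjunct2, THEN conjunct2, THEN conjunct2, THEN conjunct1,
      rule_format, of r]
  by simp

lemma SSRCT_triple:
  "1 \<le> c \<Longrightarrow> r < s \<Longrightarrow> in_diag X s (Suc c) \<Longrightarrow> in_diag X r c \<Longrightarrow>
   ent X s (Suc c) \<le> ent X r c \<Longrightarrow> in_diag X r (Suc c) \<and> ent X s (Suc c) < ent X r (Suc c)"
  using SSRCT[unfolded is_SSRCT_def, THEN conjunct2, THEN conjunct2, THEN conjunct2, THEN conjunct2,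
      rule_format, of c r s]
  by simp

lemma SSRCT_ent_pos:
  assumes "in_diag X r c"
  shows "0 < ent X r c"
proof -
  have "X ! (r - 1) \<in> set X" "X ! (r - 1) ! (c - 1) \<in> set (X ! (r - 1))"
    using assms by (auto simp: in_diag_def)
  thus ?thesis using SSRCT assms unfolding is_SSRCT_def ent_def by auto
qed

lemma SSRCT_ent_pos_iff: "0 < ent X r c \<longleftrightarrow> in_diag X r c"
  using SSRCT_ent_pos ent_outside by (metis less_irrefl)

lemma SSRCT_in_diag_first_col:
  assumes "1 \<le> r" "r \<le> length X"
  shows "in_diag X r 1"
proof -
  have "X ! (r - 1) \<noteq> []" using SSRCT assms by (simp add: is_SSRCT_def)
  thus ?thesis using assms by (simp add: in_diag_def Suc_le_eq)
qed

lemma SSRCT_first_col_strict_mono: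
  "1 \<le> r \<Longrightarrow> r < s \<Longrightarrow> s \<le> length X \<Longrightarrow> ent X r 1 < ent X s 1"
proof (induction s rule: less_induct)
  case (less s)
  show ?case
  proof (cases "Suc r = s")
    case True thus ?thesis using SSRCT_first_col_step less by auto
  next
    case False
    then obtain s' where s: "s = Suc s'" "r < s'" using less by (cases s) auto
    have "ent X r 1 < ent X s' 1" using less s by auto
    also have "\<dots> < ent X s 1" using SSRCT_first_col_step[of s'] s less by auto
    finally show ?thesis .
  qed
qed

text \<open>Two equal entries in a column would violate the triple rule for the column to their left.\<close>
lemma SSRCT_col_inj:
  assumes "in_diag X r c" "in_diag X s c" "r < s"
  shows "ent X r c \<noteq> ent X s c"
proof (cases "c = 1")
  case True thus ?thesis using SSRCT_first_col_strict_mono[of r s] assms by (auto simp: in_diag_def)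
next
  case False
  then obtain c' where c: "c = Suc c'" "1 \<le> c'" using assms by (cases c) (auto simp: in_diag_def)
  show ?thesis
  proof
    assume eq: "ent X r c = ent X s c"
    have "in_diag X r c'" using assms c by (auto simp: in_diag_def)
    moreover have "ent X s (Suc c') \<le> ent X r c'" using eq SSRCT_row_decreasing[of r c'] assms c by simp
    ultimately have "ent X s (Suc c') < ent X r (Suc c')" using SSRCT_triple[of c' r s] assms c by blast
    thus False using eq c by simp
  qed
qed

end

lemma SSRCT_delete_row:
  assumes X: "is_SSRCT X" and e: "1 \<le> e" "e \<le> length X"
  shows "is_SSRCT (delete_row e X)"
proof -
  note cells = in_diag_delete_row[OF e] and entries = ent_delete_row[OF e]
  have len: "length (delete_row e X) = length X - 1" using length_delete_row[OF e] by simp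
  have bound: "orig_row e r \<le> length X" if "r \<le> length X - 1" for r
    using that e by (auto simp: orig_row_def)
  show ?thesis
  proof (rule is_SSRCT_I)
    fix r assume "1 \<le> r" "r \<le> length (delete_row e X)"
    thus "in_diag (delete_row e X) r 1"
      using cells SSRCT_in_diag_first_col[OF X, of "orig_row e r"] bound[of r] len
      by (simp add: orig_row_def split: if_splits)
  next
    fix r c assume d: "in_diag (delete_row e X) r c"
    hence "1 \<le> r" by (simp add: in_diag_def)
    thus "0 < ent (delete_row e X) r c" using d cells entries SSRCT_ent_pos[OF X] by simp
  next
    fix r c assume "1 \<le> c" "in_diag (delete_row e X) r (Suc c)"
    moreover hence "1 \<le> r" by (simp add: in_diag_def)
    ultimately show "ent (delete_row e X) r (Suc c) \<le> ent (delete_row e X) r c"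
      using cells entries SSRCT_row_decreasing[OF X] by simp
  next
    fix r assume r: "1 \<le> r" "r < length (delete_row e X)"
    have "orig_row e r < orig_row e (Suc r)" by (rule orig_row_strict_mono) simp
    moreover have "orig_row e (Suc r) \<le> length X" using bound[of "Suc r"] r len by simp
    moreover have "1 \<le> orig_row e r" using r by (simp add: orig_row_def)
    ultimately show "ent (delete_row e X) r 1 < ent (delete_row e X) (Suc r) 1"
      using entries r SSRCT_first_col_strict_mono[OF X] by simp
  next
    fix r s c assume c: "1 \<le> c" and rs: "r < s"
      and ds: "in_diag (delete_row e X) s (Suc c)" and dr: "in_diag (delete_row e X) r c"
      and le: "ent (delete_row e X) s (Suc c) \<le> ent (delete_row e X) r c"
    have "1 \<le> r" "1 \<le> s" using dr ds by (auto simp: in_diag_def)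
    thus "in_diag (delete_row e X) r (Suc c) \<and>
        ent (delete_row e X) s (Suc c) < ent (delete_row e X) r (Suc c)"
      using SSRCT_triple[OF X c orig_row_strict_mono[OF rs]] ds dr le cells entries by simp
  qed
qed

section \<open>Columns and the map \<open>\<rho>\<close>\<close>

lemma col_entries_alt:
  "col_entries X c = map (\<lambda>r. ent X r c) (filter (\<lambda>r. in_diag X r c) [1..<length X + 1])"
proof -
  have "concat (map (\<lambda>r. if P r then [f r] else []) xs) = map f (filter P xs)"
    for P f and xs :: "nat list"
    by (induction xs) auto
  thus ?thesis unfolding col_entries_def by simp
qed

lemma finite_in_diag: "finite {r. in_diag X r c}"
  by (rule finite_subset[of _ "{..length X}"]) (auto simp: in_diag_def)

lemma mset_col_entries:
  "mset (col_entries X c) = image_mset (\<lambda>r. ent X r c) (mset_set {r. in_diag X r c})"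
proof -
  have "set (filter (\<lambda>r. in_diag X r c) [1..<length X + 1]) = {r. in_diag X r c}"
    by (auto simp: in_diag_def)
  hence "mset (filter (\<lambda>r. in_diag X r c) [1..<length X + 1]) = mset_set {r. in_diag X r c}"
    using mset_set_set[of "filter (\<lambda>r. in_diag X r c) [1..<length X + 1]"] by simp
  thus ?thesis by (simp add: col_entries_alt del: mset_filter)
qed

lemma length_col_sorted: "length (col_sorted X c) = card {r. in_diag X r c}"
  using arg_cong[OF mset_col_entries[of X c], of size] finite_in_diag[of X c]
  by (metis col_sorted_def length_rev length_sort size_image_mset size_mset size_mset_set)

lemma length_col_sorted_antimono:
  "1 \<le> c \<Longrightarrow> c \<le> d \<Longrightarrow> length (col_sorted X d) \<le> length (col_sorted X c)"
  unfolding length_col_sorted by (rule card_mono[OF finite_in_diag]) (auto simp: in_diag_def)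

lemma length_col_sorted_le_length: "length (col_sorted X c) \<le> length X"
proof -
  have "card {r. in_diag X r c} \<le> card {1..length X}"
    by (rule card_mono) (auto simp: in_diag_def)
  thus ?thesis by (simp add: length_col_sorted)
qed

lemma col_sorted_beyond_rows:
  assumes "foldr max (map length X) 0 < c"
  shows "col_sorted X c = []"
proof -
  have max_ge: "x \<le> foldr max xs 0" if "x \<in> set xs" for x :: nat and xs
    using that by (induction xs) auto
  have "{r. in_diag X r c} = {}"
  proof (rule ccontr)
    assume "{r. in_diag X r c} \<noteq> {}"
    then obtain r where "in_diag X r c" by blast
    hence "X ! (r - 1) \<in> set X" "c \<le> length (X ! (r - 1))" by (auto simp: in_diag_def)
    thus False using assms max_ge[of "length (X ! (r - 1))" "map length X"] by auto
  qed
  thus ?thesis using length_col_sorted[of X c] by simp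
qed

lemma filter_antitone_upt:
  assumes antitone: "\<And>c. 1 \<le> c \<Longrightarrow> P (Suc c) \<Longrightarrow> P c"
  shows "filter P [1..<Suc M] = [1..<Suc (length (filter P [1..<Suc M]))]"
proof (induction M)
  case 0 thus ?case by simp
next
  case (Suc M)
  show ?case
  proof (cases "P (Suc M)")
    case True
    have "P x" if "1 \<le> x" "x \<le> Suc M" for x
      using that(2,1)
    proof (induction rule: inc_induct)
      case base thus ?case using True by simp
    next
      case (step n) thus ?case using antitone[of n] by simp
    qed
    hence "filter P [1..<Suc (Suc M)] = [1..<Suc (Suc M)]" by simp
    thus ?thesis by simp
  next
    case False
    hence "filter P [1..<Suc (Suc M)] = filter P [1..<Suc M]" by (simp add: upt_Suc)
    thus ?thesis using Suc.IH by metis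
  qed
qed

lemma length_rho: "length (rho X) = length X"
  by (simp add: rho_def Let_def)

lemma rho_row:
  assumes "1 \<le> r" "r \<le> length X" "1 \<le> c"
  shows length_rho_row: "c \<le> length (rho X ! (r - 1)) \<longleftrightarrow> r \<le> length (col_sorted X c)"
    and nth_rho_row:
      "c \<le> length (rho X ! (r - 1)) \<Longrightarrow> rho X ! (r - 1) ! (c - 1) = col_sorted X c ! (r - 1)"
proof -
  define M where "M = foldr max (map length X) 0"
  define F where "F = filter (\<lambda>c. r \<le> length (col_sorted X c)) [1..<Suc M]"
  have F: "F = [1..<Suc (length F)]"
    unfolding F_def
  proof (rule filter_antitone_upt)
    fix c :: nat assume "1 \<le> c" "r \<le> length (col_sorted X (Suc c))"
    thus "r \<le> length (col_sorted X c)" using length_col_sorted_antimono[of c "Suc c" X] by simp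
  qed
  have row: "rho X ! (r - 1) = map (\<lambda>c. col_sorted X c ! (r - 1)) F"
    using assms(1,2) unfolding rho_def Let_def F_def M_def by (subst nth_map) auto
  have "c \<le> M" if "r \<le> length (col_sorted X c)"
  proof (rule ccontr)
    assume "\<not> c \<le> M"
    hence "col_sorted X c = []" using col_sorted_beyond_rows[of X c] by (simp add: M_def)
    thus False using that assms(1) by simp
  qed
  hence "c \<in> set F \<longleftrightarrow> r \<le> length (col_sorted X c)"
    using assms(3) by (auto simp: F_def)
  moreover have "c \<in> set F \<longleftrightarrow> c \<le> length F"
    using assms(3) by (subst F) auto
  ultimately show "c \<le> length (rho X ! (r - 1)) \<longleftrightarrow> r \<le> length (col_sorted X c)"
    using row by simp
  assume "c \<le> length (rho X ! (r - 1))"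
  hence c: "c - 1 < length F" using row assms(3) by simp
  have "F ! (c - 1) = c" using assms(3) c by (subst F) (simp add: nth_upt)
  thus "rho X ! (r - 1) ! (c - 1) = col_sorted X c ! (r - 1)"
    using row c by simp
qed

lemma in_diag_rho:
  "in_diag (rho X) r c \<longleftrightarrow> 1 \<le> r \<and> 1 \<le> c \<and> r \<le> length (col_sorted X c)"
  using length_rho_row[of r X c] length_col_sorted_le_length[of X c]
  by (auto simp: in_diag_def length_rho)

lemma ent_rho:
  "ent (rho X) r c = (if 1 \<le> r \<and> 1 \<le> c \<and> r \<le> length (col_sorted X c)
                      then col_sorted X c ! (r - 1) else 0)"
  using nth_rho_row[of r X c] in_diag_rho[of X r c] by (auto simp: ent_def in_diag_def length_rho)

lemma col_entries_snoc:
  "col_entries (X @ [row]) c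
     = col_entries X c @ (if 1 \<le> c \<and> c \<le> length row then [row ! (c - 1)] else [])"
proof -
  have "filter (\<lambda>r. in_diag (X @ [row]) r c) [1..<length X + 1]
      = filter (\<lambda>r. in_diag X r c) [1..<length X + 1]"
    by (rule filter_cong) (auto simp: in_diag_def nth_append)
  hence old_rows: "map (\<lambda>r. ent (X @ [row]) r c) (filter (\<lambda>r. in_diag (X @ [row]) r c) [1..<length X + 1])
     = map (\<lambda>r. ent X r c) (filter (\<lambda>r. in_diag X r c) [1..<length X + 1])"
    by (auto simp: ent_def in_diag_def nth_append)
  have "[1..<length (X @ [row]) + 1] = [1..<length X + 1] @ [length X + 1]" by (simp add: upt_Suc)
  hence "col_entries (X @ [row]) c
     = map (\<lambda>r. ent (X @ [row]) r c) (filter (\<lambda>r. in_diag (X @ [row]) r c) [1..<length X + 1])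
       @ map (\<lambda>r. ent (X @ [row]) r c) (filter (\<lambda>r. in_diag (X @ [row]) r c) [length X + 1])"
    by (simp add: col_entries_alt)
  also have "\<dots> = col_entries X c @ (if 1 \<le> c \<and> c \<le> length row then [row ! (c - 1)] else [])"
    unfolding old_rows by (simp add: col_entries_alt in_diag_def ent_def)
  finally show ?thesis .
qed

lemma col_entries_rows:
  "1 \<le> c \<Longrightarrow> col_entries X c = map (\<lambda>row. row ! (c - 1)) (filter (\<lambda>row. c \<le> length row) X)"
proof (induction X rule: rev_induct)
  case Nil thus ?case by (simp add: col_entries_def)
next
  case (snoc row X) thus ?case by (simp add: col_entries_snoc)
qed

lemma col_sorted_0: "col_sorted X 0 = []"
  by (simp add: col_sorted_def col_entries_alt in_diag_def)

lemma col_sorted_filter_nonempty_rows: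
  "col_sorted (filter (\<lambda>row. row \<noteq> []) X) c = col_sorted X c"
proof (cases "1 \<le> c")
  case True
  have "filter (\<lambda>row. c \<le> length row) (filter (\<lambda>row. row \<noteq> []) X) = filter (\<lambda>row. c \<le> length row) X"
    using True by (simp add: filter_filter) (rule filter_cong, auto)
  thus ?thesis using True by (simp add: col_sorted_def col_entries_rows)
next
  case False
  hence "c = 0" by simp
  thus ?thesis by (simp add: col_sorted_0)
qed

lemma col_len_eq_card: "1 \<le> c \<Longrightarrow> col_len X c = card {r. in_diag X r c}"
  using length_col_sorted[of X c] col_entries_rows[of c X] by (simp add: col_len_def col_sorted_def)

lemma col_sorted_decreasing:
  "distinct (col_entries X c) \<Longrightarrow> sorted_wrt (>) (col_sorted X c)"
  by (simp add: col_sorted_def sorted_wrt_rev strict_sorted_iff)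

lemma distinct_col_entries_SSRCT:
  assumes "is_SSRCT X"
  shows "distinct (col_entries X c)"
proof -
  have "inj_on (\<lambda>r. ent X r c) (set (filter (\<lambda>r. in_diag X r c) [1..<length X + 1]))"
  proof (rule inj_onI)
    fix r s assume "r \<in> set (filter (\<lambda>r. in_diag X r c) [1..<length X + 1])"
      "s \<in> set (filter (\<lambda>r. in_diag X r c) [1..<length X + 1])" "ent X r c = ent X s c"
    thus "r = s" using SSRCT_col_inj[OF assms, of r c s] SSRCT_col_inj[OF assms, of s c r]
      by (cases r s rule: linorder_cases) auto
  qed
  thus ?thesis by (simp add: col_entries_alt distinct_map)
qed

section \<open>Counting the entries above a threshold\<close>

definition count_greater :: "nat \<Rightarrow> nat list \<Rightarrow> nat" where
  "count_greater v ys = length (filter (\<lambda>y. v < y) ys)"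

context
  fixes ys :: "nat list"
  assumes decreasing: "sorted_wrt (>) ys"
begin

lemma count_greater_gt:
  assumes j: "j < length ys" and v: "v < ys ! j"
  shows "j < count_greater v ys"
proof -
  have "\<forall>y\<in>set (take (Suc j) ys). v < y"
  proof
    fix y assume "y \<in> set (take (Suc j) ys)"
    then obtain k where "k < length (take (Suc j) ys)" "y = take (Suc j) ys ! k"
      by (auto simp: in_set_conv_nth)
    hence "k \<le> j" "y = ys ! k" by auto
    thus "v < y" using sorted_wrt_nth_less[OF decreasing, of k j] j v by (cases "k = j") auto
  qed
  hence "length (filter (\<lambda>y. v < y) (take (Suc j) ys)) = Suc j" using j by simp
  moreover have "filter (\<lambda>y. v < y) ys
      = filter (\<lambda>y. v < y) (take (Suc j) ys) @ filter (\<lambda>y. v < y) (drop (Suc j) ys)"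
    by (metis append_take_drop_id filter_append)
  ultimately show ?thesis unfolding count_greater_def by simp
qed

lemma count_greater_le:
  assumes j: "j < length ys" and v: "ys ! j \<le> v"
  shows "count_greater v ys \<le> j"
proof -
  have "\<forall>y\<in>set (drop j ys). \<not> v < y"
  proof
    fix y assume "y \<in> set (drop j ys)"
    then obtain k where "k < length (drop j ys)" "y = drop j ys ! k"
      by (auto simp: in_set_conv_nth)
    hence "j + k < length ys" "y = ys ! (j + k)" by auto
    thus "\<not> v < y" using sorted_wrt_nth_less[OF decreasing, of j "j + k"] j v by (cases "k = 0") auto
  qed
  hence "filter (\<lambda>y. v < y) (drop j ys) = []" by (simp add: filter_empty_conv)
  moreover have "filter (\<lambda>y. v < y) ys
      = filter (\<lambda>y. v < y) (take j ys) @ filter (\<lambda>y. v < y) (drop j ys)"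
    by (metis append_take_drop_id filter_append)
  ultimately have "count_greater v ys = length (filter (\<lambda>y. v < y) (take j ys))"
    unfolding count_greater_def by simp
  also have "\<dots> \<le> j" using length_filter_le[of _ "take j ys"] by simp
  finally show ?thesis .
qed

lemma count_greater_nth:
  assumes j: "j < length ys"
  shows "count_greater (ys ! j) ys = j"
proof -
  have "j \<le> count_greater (ys ! j) ys"
  proof (cases j)
    case (Suc j')
    have "ys ! j < ys ! j'" using sorted_wrt_nth_less[OF decreasing, of j' j] Suc j by simp
    thus ?thesis using count_greater_gt[of j' "ys ! j"] Suc j by simp
  qed simp
  thus ?thesis using count_greater_le[OF j, of "ys ! j"] by simp
qed

end

lemma count_greater_col_sorted:
  "count_greater v (col_sorted X c) = card {r. in_diag X r c \<and> v < ent X r c}"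
proof -
  have "mset (filter (\<lambda>y. v < y) (col_sorted X c)) = mset (filter (\<lambda>y. v < y) (col_entries X c))"
    by (simp add: col_sorted_def)
  hence "count_greater v (col_sorted X c) = length (filter (\<lambda>y. v < y) (col_entries X c))"
    unfolding count_greater_def by (metis size_mset)
  also have "\<dots> = length (filter (\<lambda>r. in_diag X r c \<and> v < ent X r c) [1..<length X + 1])"
    by (simp add: col_entries_alt filter_map o_def)
  also have "\<dots> = card (set (filter (\<lambda>r. in_diag X r c \<and> v < ent X r c) [1..<length X + 1]))"
    by (rule distinct_card[symmetric]) simp
  also have "set (filter (\<lambda>r. in_diag X r c \<and> v < ent X r c) [1..<length X + 1])
      = {r. in_diag X r c \<and> v < ent X r c}"
    by (auto simp: in_diag_def)
  finally show ?thesis .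
qed

lemma mset_set_Diff_add:
  assumes "finite A" "B \<subseteq> A"
  shows "mset_set A = mset_set (A - B) + mset_set B"
proof -
  have "mset_set ((A - B) \<union> B) = mset_set (A - B) + mset_set B"
    by (rule mset_set_Union) (use assms finite_subset in auto)
  moreover have "(A - B) \<union> B = A" using assms(2) by blast
  ultimately show ?thesis by simp
qed

lemma nth_remove1:
  assumes "distinct ys" "j < length ys" "q < length ys - 1"
  shows "remove1 (ys ! j) ys ! q = (if q < j then ys ! q else ys ! Suc q)"
proof -
  have ys: "ys = take j ys @ [ys ! j] @ drop (Suc j) ys" using assms(2) by (simp add: id_take_nth_drop)
  have "ys ! j \<notin> set (take j ys)"
  proof
    assume "ys ! j \<in> set (take j ys)"
    then obtain k where "k < j" "ys ! k = ys ! j" using assms(2) by (auto simp: in_set_conv_nth)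
    thus False using assms(1,2) nth_eq_iff_index_eq by fastforce
  qed
  hence "remove1 (ys ! j) ys = take j ys @ drop (Suc j) ys"
    by (subst ys) (simp add: remove1_append)
  thus ?thesis using assms by (auto simp: nth_append min_def)
qed

lemma map_of_zip_nth_prefix:
  "distinct xs \<Longrightarrow> j < length xs \<Longrightarrow> length xs \<le> length ys \<Longrightarrow>
   map_of (zip xs ys) (xs ! j) = Some (ys ! j)"
proof (induction xs arbitrary: ys j)
  case (Cons u xs)
  then obtain w ys' where ys: "ys = w # ys'" by (cases ys) auto
  show ?case
  proof (cases j)
    case (Suc j')
    have "(u # xs) ! j \<noteq> u" using Cons.prems Suc by (auto simp: nth_Cons)
    thus ?thesis using Cons ys Suc by auto
  qed (simp add: ys)
qed simp

lemma map_of_zip_notin: "r \<notin> set xs \<Longrightarrow> map_of (zip xs ys) r = None"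
  by (auto simp: map_of_eq_None_iff dest: set_zip_leftD)

lemma find_down_Some:
  "find_down P n = Some m \<Longrightarrow> P m \<and> m < n \<and> (\<forall>k. m < k \<and> k < n \<longrightarrow> \<not> P k)"
  by (induction n) (auto split: if_splits simp: less_Suc_eq)

lemma find_down_None: "find_down P n = None \<Longrightarrow> k < n \<Longrightarrow> \<not> P k"
  by (induction n) (auto split: if_splits simp: less_Suc_eq)

declare phi_chain.simps[simp del]

lemma phi_chain_Cons: "phi_chain \<tau> i r = r # tl (phi_chain \<tau> i r)"
proof -
  have "\<exists>cs. phi_chain \<tau> i r = r # cs" by (subst phi_chain.simps) (simp split: option.split)
  thus ?thesis by auto
qed

lemma phi_chain_step:
  "Suc j < length (phi_chain \<tau> i r) \<Longrightarrow>
   find_down (phi_cond \<tau> i (phi_chain \<tau> i r ! j)) (phi_chain \<tau> i r ! j) = Some (phi_chain \<tau> i r ! Suc j)"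
proof (induction \<tau> i r arbitrary: j rule: phi_chain.induct)
  case (1 \<tau> i r)
  show ?case
  proof (cases "find_down (phi_cond \<tau> i r) r")
    case None thus ?thesis using "1.prems" by (subst (asm) phi_chain.simps) simp
  next
    case (Some r')
    hence chain: "phi_chain \<tau> i r = r # phi_chain \<tau> i r'" by (subst phi_chain.simps) simp
    show ?thesis
    proof (cases j)
      case 0 thus ?thesis using Some chain phi_chain_Cons[of \<tau> i r'] by (metis nth_Cons_0 nth_Cons_Suc)
    next
      case (Suc j') thus ?thesis using "1.IH"[OF Some, of j'] "1.prems" chain by simp
    qed
  qed
qed

lemma phi_chain_last:
  "find_down (phi_cond \<tau> i (last (phi_chain \<tau> i r))) (last (phi_chain \<tau> i r)) = None"
proof (induction \<tau> i r rule: phi_chain.induct)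
  case (1 \<tau> i r)
  show ?case
  proof (cases "find_down (phi_cond \<tau> i r) r")
    case None
    hence "phi_chain \<tau> i r = [r]" by (subst phi_chain.simps) simp
    thus ?thesis using None by simp
  next
    case (Some r')
    hence "phi_chain \<tau> i r = r # phi_chain \<tau> i r'" by (subst phi_chain.simps) simp
    thus ?thesis using "1.IH"[OF Some] phi_chain_Cons[of \<tau> i r'] by (metis last_ConsR list.distinct(1))
  qed
qed

text \<open>\<open>col_longer\<close> says that \<open>\<rho> \<tau>\<close> has an addable node in column \<open>i+1\<close>.\<close>
locale phi_setting =
  fixes \<tau> :: tableau and i :: nat
  assumes SSRCT: "is_SSRCT \<tau>" and i_pos: "1 \<le> i"
    and col_longer: "length (col_sorted \<tau> (Suc i)) < length (col_sorted \<tau> i)"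
begin

definition "n = length \<tau>"
definition "a r = ent \<tau> r i"
definition "b r = ent \<tau> r (Suc i)"
definition "in_col r = in_diag \<tau> r i"
definition "in_next_col r = in_diag \<tau> r (Suc i)"
definition "r1 = Max {r. 1 \<le> r \<and> r \<le> length \<tau> \<and> length (\<tau> ! (r - 1)) = i}"
definition "chain = phi_chain \<tau> i r1"
definition "covered_by v r \<longleftrightarrow> b r \<le> v \<and> v < a r"
definition "exit_entry = a (last chain)"

lemmas triple_rule = SSRCT_triple[OF SSRCT]
  and row_decreasing = SSRCT_row_decreasing[OF SSRCT]
  and first_col_step = SSRCT_first_col_step[OF SSRCT]
  and first_col_strict_mono = SSRCT_first_col_strict_mono[OF SSRCT]
  and col_inj = SSRCT_col_inj[OF SSRCT]
  and ent_pos = SSRCT_ent_pos[OF SSRCT]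
  and ent_pos_iff = SSRCT_ent_pos_iff[OF SSRCT]
  and in_diag_first_col = SSRCT_in_diag_first_col[OF SSRCT]
  and distinct_col_entries = distinct_col_entries_SSRCT[OF SSRCT]

lemma ex_row: "\<exists>r. 1 \<le> r \<and> r \<le> length \<tau> \<and> length (\<tau> ! (r - 1)) = i"
proof (rule ccontr)
  assume none: "\<not> ?thesis"
  have "{r. in_diag \<tau> r i} \<subseteq> {r. in_diag \<tau> r (Suc i)}"
    using none by (auto simp: in_diag_def)
  hence "card {r. in_diag \<tau> r i} \<le> card {r. in_diag \<tau> r (Suc i)}"
    by (rule card_mono[OF finite_in_diag])
  thus False using col_longer by (simp add: length_col_sorted)
qed

lemma finite_rows_of_length_i: "finite {r. 1 \<le> r \<and> r \<le> length \<tau> \<and> length (\<tau> ! (r - 1)) = i}"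
  by (rule finite_subset[of _ "{..length \<tau>}"]) auto

lemma r1_row: "1 \<le> r1 \<and> r1 \<le> n \<and> length (\<tau> ! (r1 - 1)) = i"
proof -
  have "{r. 1 \<le> r \<and> r \<le> length \<tau> \<and> length (\<tau> ! (r - 1)) = i} \<noteq> {}" using ex_row by blast
  from Max_in[OF finite_rows_of_length_i this] show ?thesis unfolding r1_def n_def by blast
qed

lemma r1_max: "r1 < r \<Longrightarrow> r \<le> n \<Longrightarrow> length (\<tau> ! (r - 1)) \<noteq> i"
proof
  assume "r1 < r" "r \<le> n" "length (\<tau> ! (r - 1)) = i"
  hence "r \<le> r1" unfolding r1_def n_def using finite_rows_of_length_i r1_row by (intro Max_ge) auto
  thus False using \<open>r1 < r\<close> by simp
qed

lemma in_col_r1: "in_col r1" using r1_row i_pos by (simp add: in_col_def in_diag_def n_def)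
lemma not_in_next_col_r1: "\<not> in_next_col r1" using r1_row by (simp add: in_next_col_def in_diag_def)

lemma below_r1: "r1 < r \<Longrightarrow> in_col r \<Longrightarrow> in_next_col r"
  using r1_max[of r] by (simp add: in_col_def in_next_col_def in_diag_def n_def)

lemma in_next_col_in_col: "in_next_col r \<Longrightarrow> in_col r" using i_pos by (simp add: in_col_def in_next_col_def in_diag_def)

lemma b_le_a: "b r \<le> a r"
proof (cases "in_next_col r")
  case True thus ?thesis using row_decreasing[of r i] i_pos by (simp add: a_def b_def in_next_col_def)
next
  case False thus ?thesis by (simp add: b_def in_next_col_def)
qed

lemma phi_cond_iff_covered_by: "phi_cond \<tau> i rp r \<longleftrightarrow> 1 \<le> r \<and> covered_by (a rp) r"
  by (auto simp: phi_cond_def covered_by_def a_def b_def)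

lemma covered_by_in_col: "covered_by v r \<Longrightarrow> in_col r"
  using ent_pos_iff[of r i] by (auto simp: covered_by_def a_def in_col_def)

lemma in_col_bounds: "in_col r \<Longrightarrow> 1 \<le> r \<and> r \<le> n"
  by (simp add: in_col_def in_diag_def n_def)

lemma chain_Cons: "chain = r1 # tl chain"
  unfolding chain_def by (rule phi_chain_Cons)

lemma chain_ne: "chain \<noteq> []" by (subst chain_Cons) simp
lemma chain_hd: "chain ! 0 = r1" by (subst chain_Cons) simp

lemma chain_step:
  assumes "Suc j < length chain"
  shows "covered_by (a (chain ! j)) (chain ! Suc j) \<and> 1 \<le> chain ! Suc j \<and> chain ! Suc j < chain ! j \<and>
         (\<forall>k. chain ! Suc j < k \<and> k < chain ! j \<longrightarrow> \<not> covered_by (a (chain ! j)) k)"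
proof -
  have "find_down (phi_cond \<tau> i (chain ! j)) (chain ! j) = Some (chain ! Suc j)"
    using phi_chain_step assms unfolding chain_def by blast
  from find_down_Some[OF this] show ?thesis unfolding phi_cond_iff_covered_by by auto
qed

lemma chain_last_stop: "k < last chain \<Longrightarrow> 1 \<le> k \<Longrightarrow> \<not> covered_by (a (last chain)) k"
proof -
  assume "k < last chain" "1 \<le> k"
  have "find_down (phi_cond \<tau> i (last chain)) (last chain) = None"
    unfolding chain_def by (rule phi_chain_last)
  from find_down_None[OF this \<open>k < last chain\<close>] show ?thesis using \<open>1 \<le> k\<close> unfolding phi_cond_iff_covered_by
    by auto
qed

lemma chain_in_col: "j < length chain \<Longrightarrow> in_col (chain ! j) \<and> chain ! j \<le> r1"
proof (induction j)
  case 0 thus ?case using chain_hd in_col_r1 by simp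
next
  case (Suc j)
  have "covered_by (a (chain ! j)) (chain ! Suc j) \<and> chain ! Suc j < chain ! j" using chain_step Suc.prems by blast
  thus ?case using covered_by_in_col Suc by fastforce
qed

lemma chain_a_step: "Suc j < length chain \<Longrightarrow> a (chain ! j) < a (chain ! Suc j)"
  using chain_step[of j] by (simp add: covered_by_def)

lemma chain_decreasing: "sorted_wrt (>) chain"
  by (subst sorted_wrt_iff_nth_Suc_transp) (auto simp: transp_def chain_step)

lemma chain_a_increasing: "sorted_wrt (<) (map a chain)"
  by (subst sorted_wrt_iff_nth_Suc_transp) (auto simp: transp_def chain_a_step)

lemma chain_nth_less: "j < k \<Longrightarrow> k < length chain \<Longrightarrow> chain ! k < chain ! j"
  using chain_decreasing by (simp add: sorted_wrt_iff_nth_less)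

lemma distinct_chain: "distinct chain"
  unfolding distinct_conv_nth
proof (intro allI impI)
  fix j k assume "j < length chain" "k < length chain" "j \<noteq> k"
  thus "chain ! j \<noteq> chain ! k" using chain_nth_less[of j k] chain_nth_less[of k j] by (cases "j < k") auto
qed

lemma chain_a_nth_less: "j < k \<Longrightarrow> k < length chain \<Longrightarrow> a (chain ! j) < a (chain ! k)"
  using chain_a_increasing by (simp add: sorted_wrt_iff_nth_less)

text \<open>Otherwise the triple rule for rows \<open>r\<^sub>1 < r\<close> would force a box \<open>(r\<^sub>1,i+1)\<close>.\<close>
lemma a_r1_less_b_below_r1:
  assumes "r1 < r" "in_col r"
  shows "a r1 < b r"
proof (rule ccontr)
  assume "\<not> a r1 < b r"
  moreover have "in_next_col r" using below_r1 assms by blast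
  ultimately have "in_next_col r1" using triple_rule[of i r1 r] i_pos assms in_col_r1
    by (simp add: in_col_def in_next_col_def a_def b_def)
  thus False using not_in_next_col_r1 by simp
qed

lemma b_le_covered:
  assumes "covered_by v r" "r < s" "b s \<le> a r"
  shows "b s \<le> v"
proof (cases "in_next_col s")
  case True
  hence "b s < b r" using triple_rule[of i r s] i_pos assms covered_by_in_col
    by (simp add: in_col_def in_next_col_def a_def b_def)
  thus ?thesis using assms(1) by (simp add: covered_by_def)
qed (simp add: b_def in_next_col_def)

lemma chain_no_cover_below: "j < length chain \<Longrightarrow> chain ! j < r \<Longrightarrow> \<not> covered_by (a (chain ! j)) r"
proof (induction j arbitrary: r)
  case 0
  thus ?case using a_r1_less_b_below_r1[of r] covered_by_in_col chain_hd
    by (auto simp: covered_by_def)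
next
  case (Suc j)
  define rp rr where "rp = chain ! j" and "rr = chain ! Suc j"
  have step: "covered_by (a rp) rr" "rr < rp" "\<forall>k. rr < k \<and> k < rp \<longrightarrow> \<not> covered_by (a rp) k"
    using chain_step[of j] Suc.prems unfolding rp_def rr_def by blast+
  show ?case
  proof
    assume "covered_by (a (chain ! Suc j)) r"
    hence covered: "covered_by (a rr) r" by (simp add: rr_def)
    have "rr < r" using Suc.prems rr_def by simp
    hence "covered_by (a rp) r"
      using b_le_covered[OF step(1)] covered step(1) by (simp add: covered_by_def)
    moreover have "r \<noteq> rp" using \<open>covered_by (a rp) r\<close> by (auto simp: covered_by_def)
    ultimately show False using step \<open>rr < r\<close> Suc.IH[of r] Suc.prems rp_def
      by (metis Suc_lessD linorder_neqE_nat)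
  qed
qed

lemma last_chain: "last chain = chain ! (length chain - 1)" using chain_ne by (simp add: last_conv_nth)

lemma exit_entry_not_covered: "\<not> covered_by exit_entry r"
proof
  assume cv: "covered_by exit_entry r"
  have Dr: "in_col r" using cv covered_by_in_col by blast
  consider "r < last chain" | "r = last chain" | "last chain < r" by linarith
  thus False
  proof cases
    case 1 thus False using chain_last_stop[of r] cv in_col_bounds[OF Dr] by (simp add: exit_entry_def)
  next
    case 2 thus False using cv by (simp add: exit_entry_def covered_by_def)
  next
    case 3 thus False using chain_no_cover_below[of "length chain - 1" r] cv chain_ne by (simp add: exit_entry_def last_chain)
  qed
qed

lemma covered_below_chain_nth: "j < length chain \<Longrightarrow> v < a (chain ! j) \<Longrightarrow> \<exists>r. covered_by v r"
proof (induction j)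
  case 0
  have "b r1 = 0" using not_in_next_col_r1 by (simp add: b_def in_next_col_def)
  hence "covered_by v r1" using 0 chain_hd by (simp add: covered_by_def)
  thus ?case by blast
next
  case (Suc j)
  show ?case
  proof (cases "v < a (chain ! j)")
    case True thus ?thesis using Suc by simp
  next
    case False
    have "covered_by (a (chain ! j)) (chain ! Suc j)" using chain_step Suc.prems by blast
    hence "covered_by v (chain ! Suc j)" using False Suc.prems by (auto simp: covered_by_def)
    thus ?thesis by blast
  qed
qed

lemma covered_below_exit_entry: "v < exit_entry \<Longrightarrow> \<exists>r. covered_by v r"
  using covered_below_chain_nth[of "length chain - 1" v] chain_ne by (simp add: exit_entry_def last_chain)

subsection \<open>Where the backward slide turns\<close>

abbreviation "col c \<equiv> col_sorted \<tau> c"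

lemma col_decreasing: "sorted_wrt (>) (col c)"
  by (rule col_sorted_decreasing[OF distinct_col_entries])

lemma
  shows count_greater_next_col_le: "count_greater v (col (Suc i)) \<le> count_greater v (col i)"
    and count_greater_next_col_less_iff:
      "count_greater v (col (Suc i)) < count_greater v (col i) \<longleftrightarrow> (\<exists>r. covered_by v r)"
proof -
  define A where "A = {r. in_col r \<and> v < a r}"
  define B where "B = {r. in_next_col r \<and> v < b r}"
  have count: "count_greater v (col i) = card A" "count_greater v (col (Suc i)) = card B"
    by (simp_all add: count_greater_col_sorted A_def B_def in_col_def in_next_col_def a_def b_def)
  have fin: "finite A"
    unfolding A_def in_col_def by (rule finite_subset[OF _ finite_in_diag[of \<tau> i]]) auto
  have BA: "B \<subseteq> A"
    using in_next_col_in_col b_le_a by (auto simp: A_def B_def intro: less_le_trans)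
  show "count_greater v (col (Suc i)) \<le> count_greater v (col i)"
    unfolding count by (rule card_mono[OF fin BA])
  have "card B < card A \<longleftrightarrow> B \<noteq> A"
  proof
    assume "B \<noteq> A"
    hence "B \<subset> A" using BA by blast
    thus "card B < card A" by (rule psubset_card_mono[OF fin])
  qed auto
  moreover have "A - B = {r. covered_by v r}"
    using covered_by_in_col by (auto simp: A_def B_def covered_by_def b_def in_next_col_def)
  ultimately show "count_greater v (col (Suc i)) < count_greater v (col i) \<longleftrightarrow> (\<exists>r. covered_by v r)"
    unfolding count using BA by blast
qed

lemma exit_entry_in_col: "exit_entry \<in> set (col i)"
proof -
  have "in_col (last chain)" using chain_in_col[of "length chain - 1"] chain_ne last_chain by simp
  hence "last chain \<in> set (filter (\<lambda>r. in_diag \<tau> r i) [1..<length \<tau> + 1])"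
    by (auto simp: in_col_def in_diag_def)
  hence "exit_entry \<in> set (col_entries \<tau> i)" by (auto simp: col_entries_alt exit_entry_def a_def)
  thus ?thesis by (simp add: col_sorted_def)
qed

definition "exit_pos = (SOME j. j < length (col i) \<and> col i ! j = exit_entry)"

lemma exit_pos: "exit_pos < length (col i) \<and> col i ! exit_pos = exit_entry"
proof -
  have "\<exists>j. j < length (col i) \<and> col i ! j = exit_entry"
    using exit_entry_in_col by (simp add: in_set_conv_nth)
  thus ?thesis unfolding exit_pos_def by (rule someI_ex)
qed

text \<open>\<open>tjdt_row\<close> is the largest \<open>r\<close> with \<open>slide_turns r\<close>.\<close>
definition "slide_turns r \<longleftrightarrow> in_diag (rho \<tau>) r i \<and>
   (r = 1 \<or> ent (rho \<tau>) r i < ent (rho \<tau>) (r - 1) (Suc i))"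

text \<open>No row covers \<open>exit_entry\<close>, so as many entries of column \<open>i+1\<close> as of column \<open>i\<close> exceed it:
  the entry of \<open>\<rho> \<tau>\<close> in column \<open>i+1\<close> just below \<open>exit_entry\<close> is larger than it.\<close>
lemma slide_turns_exit_pos: "slide_turns (Suc exit_pos)"
proof (cases exit_pos)
  case (Suc q)
  have "count_greater exit_entry (col i) = exit_pos"
    using count_greater_nth[OF col_decreasing[of i], of exit_pos] exit_pos by simp
  moreover have "\<not> count_greater exit_entry (col (Suc i)) < count_greater exit_entry (col i)"
    using count_greater_next_col_less_iff exit_entry_not_covered by blast
  ultimately have count: "count_greater exit_entry (col (Suc i)) = exit_pos"
    using count_greater_next_col_le[of exit_entry] by simp
  moreover have "count_greater exit_entry (col (Suc i)) \<le> length (col (Suc i))"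
    by (simp add: count_greater_def)
  ultimately have q: "q < length (col (Suc i))" using Suc by simp
  have "exit_entry < col (Suc i) ! q"
  proof (rule ccontr)
    assume "\<not> exit_entry < col (Suc i) ! q"
    hence "count_greater exit_entry (col (Suc i)) \<le> q"
      using count_greater_le[OF col_decreasing[of "Suc i"] q] by simp
    thus False using count Suc by simp
  qed
  thus ?thesis using exit_pos q Suc i_pos by (simp add: slide_turns_def in_diag_rho ent_rho)
qed (use exit_pos i_pos in \<open>auto simp: slide_turns_def in_diag_rho Suc_le_eq\<close>)

text \<open>Below \<open>exit_entry\<close>, every entry \<open>y\<close> of column \<open>i\<close> is covered by some row, so fewer entries of
  column \<open>i+1\<close> than of column \<open>i\<close> exceed \<open>y\<close>.\<close>
lemma slide_turns_le_exit_pos: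
  assumes "slide_turns r"
  shows "r \<le> Suc exit_pos"
proof (rule ccontr)
  assume "\<not> r \<le> Suc exit_pos"
  hence below: "Suc exit_pos < r" by simp
  have r: "r \<le> length (col i)" "1 \<le> r" using assms by (simp_all add: slide_turns_def in_diag_rho)
  define y where "y = col i ! (r - 1)"
  have "y < exit_entry"
    using sorted_wrt_nth_less[OF col_decreasing[of i], of exit_pos "r - 1"] below r exit_pos y_def by simp
  hence covered: "count_greater y (col (Suc i)) < count_greater y (col i)"
    using count_greater_next_col_less_iff covered_below_exit_entry by blast
  have "y < ent (rho \<tau>) (r - 1) (Suc i)"
    using assms below r i_pos by (auto simp: slide_turns_def ent_rho y_def)
  hence r': "r - 1 \<le> length (col (Suc i))" "1 \<le> r - 1" "y < col (Suc i) ! (r - 1 - 1)"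
    by (auto simp: ent_rho split: if_splits)
  hence "r - 1 - 1 < count_greater y (col (Suc i))"
    using count_greater_gt[OF col_decreasing[of "Suc i"], of "r - 1 - 1" y] by simp
  hence "r - 1 \<le> count_greater y (col (Suc i))" using r' by linarith
  moreover have "count_greater y (col i) = r - 1"
    using count_greater_nth[OF col_decreasing[of i], of "r - 1"] r y_def by simp
  ultimately show False using covered by simp
qed

lemma tjdt_row_eq: "tjdt_row (Suc i) (rho \<tau>) = Suc exit_pos"
  unfolding tjdt_row_def diff_Suc_1 slide_turns_def[symmetric]
  by (rule Greatest_equality) (use slide_turns_exit_pos slide_turns_le_exit_pos in auto)

subsection \<open>The filling \<open>\<phi>\<^sub>i\<^sub>+\<^sub>1 \<tau>\<close>\<close>

text \<open>\<open>new_a r\<close> is the entry of \<open>\<phi>\<^sub>i\<^sub>+\<^sub>1 \<tau>\<close> in cell \<open>(r,i)\<close>, and \<open>phi_rows\<close> is \<open>\<phi>\<^sub>i\<^sub>+\<^sub>1 \<tau>\<close> before its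
  empty row (only possible for \<open>i = 1\<close>) is removed.\<close>
definition "new_a r = (case map_of (zip (tl chain) chain) r of Some q \<Rightarrow> a q | None \<Rightarrow> a r)"

definition "phi_row p = (let row = \<tau> ! (p - 1) in
                 if p = r1 then take (i - 1) row
                 else (case map_of (zip (tl chain) chain) p of
                         Some q \<Rightarrow> row[i - 1 := ent \<tau> q i]
                       | None \<Rightarrow> row))"

definition "phi_rows = map phi_row [1..<n + 1]"

lemma phi_eq: "phi (Suc i) \<tau> = filter (\<lambda>row. row \<noteq> []) phi_rows"
  unfolding phi_def phi_rows_def phi_row_def r1_def chain_def n_def Let_def diff_Suc_1 by (rule refl)

lemma in_tl_chain: "r \<in> set (tl chain) \<longleftrightarrow> (\<exists>j. Suc j < length chain \<and> r = chain ! Suc j)"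
proof
  assume "r \<in> set (tl chain)"
  then obtain j where "j < length (tl chain)" "tl chain ! j = r" unfolding in_set_conv_nth by blast
  hence "Suc j < length chain \<and> r = chain ! Suc j" by (auto simp: nth_tl)
  thus "\<exists>j. Suc j < length chain \<and> r = chain ! Suc j" by blast
next
  assume "\<exists>j. Suc j < length chain \<and> r = chain ! Suc j"
  then obtain j where "Suc j < length chain" "r = chain ! Suc j" by blast
  hence "j < length (tl chain)" "tl chain ! j = r" by (auto simp: nth_tl)
  thus "r \<in> set (tl chain)" by (metis nth_mem)
qed

lemma map_of_chain: "Suc j < length chain \<Longrightarrow> map_of (zip (tl chain) chain) (chain ! Suc j) = Some (chain ! j)"
  using map_of_zip_nth_prefix[of "tl chain" j chain] distinct_chain by (simp add: distinct_tl nth_tl)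

lemma new_a_chain: "Suc j < length chain \<Longrightarrow> new_a (chain ! Suc j) = a (chain ! j)"
  by (simp add: new_a_def map_of_chain)

lemma new_a_notin_chain: "r \<notin> set (tl chain) \<Longrightarrow> new_a r = a r"
  by (simp add: new_a_def map_of_zip_notin)

lemma r1_notin_tl_chain: "r1 \<notin> set (tl chain)"
  using distinct_chain chain_Cons by (metis distinct.simps(2))

lemma new_a_le_a: "new_a r \<le> a r"
proof (cases "r \<in> set (tl chain)")
  case True
  then obtain j where "Suc j < length chain" "r = chain ! Suc j" by (auto simp: in_tl_chain)
  thus ?thesis using new_a_chain chain_a_step[of j] by simp
next
  case False thus ?thesis by (simp add: new_a_notin_chain)
qed

lemma b_le_new_a: "r \<noteq> r1 \<Longrightarrow> b r \<le> new_a r"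
proof (cases "r \<in> set (tl chain)")
  case True
  then obtain j where j: "Suc j < length chain" "r = chain ! Suc j" by (auto simp: in_tl_chain)
  thus ?thesis using new_a_chain chain_step[of j] by (simp add: covered_by_def)
next
  case False thus ?thesis by (simp add: new_a_notin_chain b_le_a)
qed

lemma new_a_pos: "in_col r \<Longrightarrow> 0 < new_a r"
proof (cases "r \<in> set (tl chain)")
  case True
  then obtain j where j: "Suc j < length chain" "r = chain ! Suc j" by (auto simp: in_tl_chain)
  hence "in_col (chain ! j)" using chain_in_col[of j] by simp
  thus ?thesis using j new_a_chain ent_pos by (simp add: in_col_def a_def)
next
  case False
  assume "in_col r" thus ?thesis using False new_a_notin_chain ent_pos by (simp add: in_col_def a_def)
qed

lemma phi_row_r1: "phi_row r1 = take (i - 1) (\<tau> ! (r1 - 1))"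
  by (simp add: phi_row_def)

lemma phi_row_other: "p \<noteq> r1 \<Longrightarrow> phi_row p = (if p \<in> set (tl chain) then (\<tau> ! (p - 1))[i - 1 := new_a p] else \<tau> ! (p - 1))"
proof (cases "p \<in> set (tl chain)")
  case True
  then obtain j where j: "Suc j < length chain" "p = chain ! Suc j" by (auto simp: in_tl_chain)
  assume "p \<noteq> r1"
  thus ?thesis using True j map_of_chain[of j] new_a_chain[of j] by (simp add: phi_row_def a_def)
next
  case False
  assume "p \<noteq> r1"
  thus ?thesis using False by (simp add: phi_row_def map_of_zip_notin)
qed

lemma length_phi_row: "length (phi_row p) = (if p = r1 then i - 1 else length (\<tau> ! (p - 1)))"
  using phi_row_r1 phi_row_other[of p] r1_row by auto

lemma length_phi_rows: "length phi_rows = n" by (simp add: phi_rows_def)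

lemma nth_phi_rows: "1 \<le> p \<Longrightarrow> p \<le> n \<Longrightarrow> phi_rows ! (p - 1) = phi_row p"
  by (simp add: phi_rows_def nth_upt)

lemma in_diag_phi_rows: "in_diag phi_rows r c \<longleftrightarrow> in_diag \<tau> r c \<and> \<not> (r = r1 \<and> c = i)"
proof (cases "1 \<le> r \<and> r \<le> n")
  case False thus ?thesis by (auto simp: in_diag_def length_phi_rows n_def)
next
  case True
  thus ?thesis using length_phi_row[of r] nth_phi_rows[of r] r1_row by (auto simp: in_diag_def length_phi_rows n_def)
qed

lemma ent_phi_rows: "ent phi_rows r c = (if in_diag phi_rows r c then (if c = i then new_a r else ent \<tau> r c) else 0)"
proof (cases "in_diag phi_rows r c")
  case False thus ?thesis by simp
next
  case True
  hence T: "in_diag \<tau> r c" "\<not> (r = r1 \<and> c = i)" using in_diag_phi_rows by auto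
  hence b: "1 \<le> r" "r \<le> n" "1 \<le> c" "c \<le> length (\<tau> ! (r - 1))" by (auto simp: in_diag_def n_def)
  have "ent phi_rows r c = phi_row r ! (c - 1)" using True b nth_phi_rows by (simp add: ent_def)
  also have "\<dots> = (if c = i then new_a r else ent \<tau> r c)"
  proof (cases "r = r1")
    case True
    hence "c < i" using T b r1_row by simp
    thus ?thesis using True phi_row_r1 T b by (simp add: ent_def nth_take)
  next
    case not_r1: False
    show ?thesis
    proof (cases "r \<in> set (tl chain)")
      case True
      hence rw: "phi_row r = (\<tau> ! (r - 1))[i - 1 := new_a r]" using not_r1 phi_row_other[of r] by simp
      show ?thesis
      proof (cases "c = i")
        case True thus ?thesis using rw b by simp
      next
        case ne: False
        hence "c - 1 \<noteq> i - 1" using b i_pos by arith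
        thus ?thesis using rw ne T by (simp add: ent_def)
      qed
    next
      case False
      thus ?thesis using not_r1 phi_row_other[of r] T b new_a_notin_chain[of r] by (auto simp: ent_def a_def)
    qed
  qed
  finally show ?thesis using True by simp
qed

lemma in_diag_phi_rows_other_col: "c \<noteq> i \<Longrightarrow> in_diag phi_rows r c = in_diag \<tau> r c"
  by (simp add: in_diag_phi_rows)

lemma ent_phi_rows_other_col: "c \<noteq> i \<Longrightarrow> ent phi_rows r c = ent \<tau> r c"
  by (simp add: ent_phi_rows in_diag_phi_rows)

lemma ent_phi_rows_col_i: "ent phi_rows r i = (if in_col r \<and> r \<noteq> r1 then new_a r else 0)"
  by (simp add: ent_phi_rows in_diag_phi_rows in_col_def)

lemma in_diag_phi_rows_col_i: "in_diag phi_rows r i = (in_col r \<and> r \<noteq> r1)"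
  by (simp add: in_diag_phi_rows in_col_def)

lemma chain_covered_only_by_succ:
  assumes "Suc j < length chain" "chain ! Suc j < s" "s \<noteq> chain ! j"
  shows "\<not> covered_by (a (chain ! j)) s"
  using chain_step[of j] chain_no_cover_below[of j s] assms by (cases "s < chain ! j") auto

lemma triple_rule_col_i_moved:
  assumes c: "Suc c = i" and j: "Suc j < length chain" and rs: "r < chain ! Suc j"
    and dr: "in_diag \<tau> r c" and le: "a (chain ! j) \<le> ent \<tau> r c"
  shows "in_col r \<and> r \<noteq> r1 \<and> a (chain ! j) < new_a r"
proof -
  have "chain ! Suc j < chain ! j" using chain_nth_less[of j "Suc j"] j by simp
  moreover have "in_col (chain ! j)" using chain_in_col[of j] j by simp
  ultimately have "in_diag \<tau> r i \<and> a (chain ! j) < a r"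
    using triple_rule[of c r "chain ! j"] dr le rs c by (simp add: in_col_def a_def in_diag_def)
  hence col_r: "in_col r" and less: "a (chain ! j) < a r" by (simp_all add: in_col_def)
  have "r \<noteq> r1" using rs chain_nth_less[of 0 "Suc j"] j chain_hd by auto
  moreover have "a (chain ! j) < new_a r"
  proof (cases "r \<in> set (tl chain)")
    case True
    then obtain m where m: "Suc m < length chain" "r = chain ! Suc m" by (auto simp: in_tl_chain)
    have "j < m"
    proof (rule ccontr)
      assume "\<not> j < m"
      hence "chain ! Suc j \<le> chain ! Suc m"
        using chain_nth_less[of "Suc m" "Suc j"] j by (cases "m = j") auto
      thus False using rs m by simp
    qed
    thus ?thesis using m new_a_chain chain_a_nth_less[of j m] by simp
  qed (use less new_a_notin_chain in simp)
  ultimately show ?thesis using col_r by simp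
qed

lemma triple_rule_col_i_fixed:
  assumes c: "Suc c = i" and rs: "r < s" and s: "in_col s" "s \<noteq> r1" "s \<notin> set (tl chain)"
    and dr: "in_diag \<tau> r c" and le: "a s \<le> ent \<tau> r c"
  shows "in_col r \<and> r \<noteq> r1 \<and> a s < new_a r"
proof -
  have "in_diag \<tau> r i \<and> a s < a r"
    using triple_rule[of c r s] dr le rs s c by (simp add: in_col_def a_def in_diag_def)
  hence col_r: "in_col r" and less: "a s < a r" by (simp_all add: in_col_def)
  have "r \<noteq> r1" using a_r1_less_b_below_r1[of s] rs s less b_le_a[of s] by auto
  moreover have "a s < new_a r"
  proof (cases "r \<in> set (tl chain)")
    case True
    then obtain j where j: "Suc j < length chain" "r = chain ! Suc j" by (auto simp: in_tl_chain)
    have s_ne: "s \<noteq> chain ! j"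
    proof (cases j)
      case (Suc j')
      hence "chain ! j \<in> set (tl chain)"
        unfolding in_tl_chain using j by (intro exI[of _ j']) simp
      thus ?thesis using s(3) by auto
    qed (use s(2) chain_hd in simp)
    have "a (chain ! j) \<noteq> a s"
      using col_inj[of s i "chain ! j"] col_inj[of "chain ! j" i s] s(1) chain_in_col[of j] j s_ne
      by (cases "s < chain ! j") (auto simp: in_col_def a_def)
    moreover have "\<not> covered_by (a (chain ! j)) s"
      using chain_covered_only_by_succ[of j s] j rs s_ne by simp
    moreover have "b s \<le> a (chain ! j)"
      using b_le_covered[of "a (chain ! j)" r s] chain_step[of j] j rs b_le_a[of s] less by simp
    ultimately have "a s < a (chain ! j)" by (auto simp: covered_by_def)
    thus ?thesis using new_a_chain j by simp
  qed (use less new_a_notin_chain in simp)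
  ultimately show ?thesis using col_r by simp
qed

lemma triple_rule_col_i:
  assumes c: "Suc c = i" and rs: "r < s" and s: "in_col s" "s \<noteq> r1" and dr: "in_diag \<tau> r c"
    and le: "new_a s \<le> ent \<tau> r c"
  shows "in_col r \<and> r \<noteq> r1 \<and> new_a s < new_a r"
proof (cases "s \<in> set (tl chain)")
  case True
  then obtain j where "Suc j < length chain" "s = chain ! Suc j" by (auto simp: in_tl_chain)
  thus ?thesis using triple_rule_col_i_moved[OF c] rs dr le new_a_chain by simp
qed (use triple_rule_col_i_fixed[OF c rs s] dr le new_a_notin_chain in simp)

lemma phi_rows_row_decreasing:
  assumes c1: "1 \<le> c" and d: "in_diag phi_rows r (Suc c)"
  shows "ent phi_rows r (Suc c) \<le> ent phi_rows r c"
proof (cases "Suc c = i")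
  case True
  hence "in_col r" "r \<noteq> r1" using d in_diag_phi_rows_col_i by auto
  moreover have "in_diag \<tau> r (Suc c)" using True \<open>in_col r\<close> by (simp add: in_col_def)
  ultimately show ?thesis using True ent_phi_rows_col_i ent_phi_rows_other_col[of c r] new_a_le_a[of r] row_decreasing[of r c] c1
    by (simp add: a_def)
next
  case F: False
  show ?thesis
  proof (cases "c = i")
    case True
    hence dd: "in_next_col r" using d in_diag_phi_rows_other_col[of "Suc c" r] by (simp add: in_next_col_def)
    hence "r \<noteq> r1" using not_in_next_col_r1 by auto
    thus ?thesis using True dd in_next_col_in_col ent_phi_rows_col_i ent_phi_rows_other_col[of "Suc i" r] b_le_new_a[of r]
      by (simp add: b_def)
  next
    case False
    thus ?thesis using F d ent_phi_rows_other_col in_diag_phi_rows_other_col row_decreasing[of r c] c1 by simp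
  qed
qed

lemma phi_rows_triple:
  assumes c1: "1 \<le> c" and rs: "r < s" and ds: "in_diag phi_rows s (Suc c)" and dr: "in_diag phi_rows r c"
    and le: "ent phi_rows s (Suc c) \<le> ent phi_rows r c"
  shows "in_diag phi_rows r (Suc c) \<and> ent phi_rows s (Suc c) < ent phi_rows r (Suc c)"
proof (cases "Suc c = i")
  case True
  have ci: "c \<noteq> i" using True by simp
  have "in_col s" "s \<noteq> r1" using ds True in_diag_phi_rows_col_i by auto
  moreover have "in_diag \<tau> r c" using dr in_diag_phi_rows_other_col[OF ci] by simp
  moreover have "new_a s \<le> ent \<tau> r c"
    using le True ent_phi_rows_col_i ent_phi_rows_other_col[OF ci] \<open>in_col s\<close> \<open>s \<noteq> r1\<close> by simp
  ultimately have "in_col r \<and> r \<noteq> r1 \<and> new_a s < new_a r" using triple_rule_col_i[OF True rs] by blast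
  thus ?thesis using True ent_phi_rows_col_i in_diag_phi_rows_col_i \<open>in_col s\<close> \<open>s \<noteq> r1\<close> by simp
next
  case F: False
  show ?thesis
  proof (cases "c = i")
    case True
    have Ds: "in_next_col s" using ds True in_diag_phi_rows_other_col[of "Suc c" s] by (simp add: in_next_col_def)
    have Dr: "in_col r" "r \<noteq> r1" using dr True in_diag_phi_rows_col_i by auto
    have "b s \<le> new_a r" using le True ent_phi_rows_other_col[of "Suc i" s] ent_phi_rows_col_i Dr by (simp add: b_def)
    hence "b s \<le> a r" using new_a_le_a[of r] by simp
    hence "in_next_col r \<and> b s < b r" using triple_rule[of i r s] i_pos rs Ds Dr by (simp add: in_col_def in_next_col_def a_def b_def)
    thus ?thesis using True in_diag_phi_rows_other_col[of "Suc i"] ent_phi_rows_other_col[of "Suc i"] by (simp add: in_next_col_def b_def)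
  next
    case False
    thus ?thesis using F triple_rule[of c r s] c1 rs ds dr le in_diag_phi_rows_other_col ent_phi_rows_other_col by simp
  qed
qed

lemma SSRCT_phi_rows:
  assumes i2: "2 \<le> i"
  shows "is_SSRCT phi_rows"
proof (rule is_SSRCT_I)
  fix r assume "1 \<le> r" "r \<le> length phi_rows"
  thus "in_diag phi_rows r 1"
    using in_diag_first_col[of r] i2 in_diag_phi_rows_other_col[of 1 r] by (simp add: length_phi_rows n_def)
next
  fix r c assume d: "in_diag phi_rows r c"
  show "0 < ent phi_rows r c"
  proof (cases "c = i")
    case True thus ?thesis using d new_a_pos ent_phi_rows_col_i in_diag_phi_rows_col_i by auto
  next
    case False thus ?thesis using d ent_phi_rows_other_col in_diag_phi_rows_other_col ent_pos by simp
  qed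
next
  fix r c assume "1 \<le> c" "in_diag phi_rows r (Suc c)"
  thus "ent phi_rows r (Suc c) \<le> ent phi_rows r c" by (rule phi_rows_row_decreasing)
next
  fix r assume "1 \<le> r" "r < length phi_rows"
  thus "ent phi_rows r 1 < ent phi_rows (Suc r) 1"
    using first_col_step[of r] i2 ent_phi_rows_other_col[of 1] by (simp add: length_phi_rows n_def)
next
  fix r s c assume "1 \<le> c" "r < s" "in_diag phi_rows s (Suc c)" "in_diag phi_rows r c"
    "ent phi_rows s (Suc c) \<le> ent phi_rows r c"
  thus "in_diag phi_rows r (Suc c) \<and> ent phi_rows s (Suc c) < ent phi_rows r (Suc c)"
    by (rule phi_rows_triple)
qed

lemma phi_rows_nonempty: "2 \<le> i \<Longrightarrow> k < length phi_rows \<Longrightarrow> phi_rows ! k \<noteq> []"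
proof -
  assume i2: "2 \<le> i" and k: "k < length phi_rows"
  have "in_diag phi_rows (Suc k) 1" using in_diag_first_col[of "Suc k"] k i2 in_diag_phi_rows_other_col[of 1 "Suc k"]
    by (simp add: length_phi_rows n_def)
  thus ?thesis by (auto simp: in_diag_def)
qed

lemma phi_eq_phi_rows: "2 \<le> i \<Longrightarrow> phi (Suc i) \<tau> = phi_rows"
proof -
  assume i2: "2 \<le> i"
  have "filter (\<lambda>row. row \<noteq> []) phi_rows = phi_rows" by (rule filter_nonempty_rows_id) (rule phi_rows_nonempty[OF i2])
  thus ?thesis using phi_eq by simp
qed

lemma length_chain_1: "i = 1 \<Longrightarrow> length chain = 1"
proof (rule ccontr)
  assume i: "i = 1" and ne: "length chain \<noteq> 1"
  hence l: "Suc 0 < length chain" using chain_ne by (cases chain) auto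
  have st: "covered_by (a (chain ! 0)) (chain ! Suc 0) \<and> 1 \<le> chain ! Suc 0 \<and> chain ! Suc 0 < chain ! 0"
    using chain_step[of 0] l by simp
  hence "ent \<tau> r1 i < ent \<tau> (chain ! Suc 0) i" using chain_hd by (simp add: covered_by_def a_def)
  hence "ent \<tau> r1 1 < ent \<tau> (chain ! Suc 0) 1" unfolding i .
  moreover have "ent \<tau> (chain ! Suc 0) 1 < ent \<tau> r1 1" using first_col_strict_mono[of "chain ! Suc 0" r1] st chain_hd r1_row
    by (simp add: n_def)
  ultimately show False by simp
qed

lemma tl_chain_1: "i = 1 \<Longrightarrow> tl chain = []"
  using length_chain_1 by (cases chain) auto

lemma phi_eq_delete_r1:
  assumes i: "i = 1"
  shows "phi (Suc i) \<tau> = delete_row r1 \<tau>"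
proof -
  have r1_empty: "phi_row r1 = []" using phi_row_r1 i by simp
  have other: "phi_row p = \<tau> ! (p - 1)" if "p \<noteq> r1" for p
    using phi_row_other[OF that] tl_chain_1[OF i] by simp
  have rows: "phi_rows = \<tau>[r1 - 1 := []]"
  proof (rule nth_equalityI)
    fix k assume "k < length phi_rows"
    thus "phi_rows ! k = \<tau>[r1 - 1 := []] ! k"
      using nth_phi_rows[of "Suc k"] r1_empty other[of "Suc k"] r1_row
      by (cases "k = r1 - 1") (auto simp: length_phi_rows n_def)
  qed (simp add: length_phi_rows n_def)
  have "filter (\<lambda>row. row \<noteq> []) phi_rows = delete_row r1 phi_rows"
  proof (rule filter_nonempty_rows_single_empty)
    show "1 \<le> r1" "r1 \<le> length phi_rows" using r1_row by (auto simp: length_phi_rows n_def)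
    show "phi_rows ! (r1 - 1) = []" using rows r1_row by (auto simp: n_def)
    fix k assume k: "k < length phi_rows" "k \<noteq> r1 - 1"
    hence "in_diag \<tau> (Suc k) 1" using in_diag_first_col[of "Suc k"] by (simp add: length_phi_rows n_def)
    thus "phi_rows ! k \<noteq> []" using rows k by (auto simp: in_diag_def)
  qed
  thus ?thesis using phi_eq rows r1_row by (simp add: delete_row_def)
qed

lemma SSRCT_phi: "is_SSRCT (phi (Suc i) \<tau>)"
proof (cases "i = 1")
  case True thus ?thesis using phi_eq_delete_r1 SSRCT_delete_row[OF SSRCT] r1_row by (simp add: n_def)
next
  case False thus ?thesis using phi_eq_phi_rows SSRCT_phi_rows i_pos by simp
qed

lemma length_phi: "length (phi (Suc i) \<tau>) = (if i = 1 then n - 1 else n)"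
  using phi_eq_delete_r1 phi_eq_phi_rows length_delete_row[of r1 \<tau>] r1_row length_phi_rows i_pos
  by (auto simp: n_def)

lemma mset_col_entries_phi_rows_other_col: "c \<noteq> i \<Longrightarrow> mset (col_entries phi_rows c) = mset (col_entries \<tau> c)"
proof -
  assume c: "c \<noteq> i"
  have "{r. in_diag phi_rows r c} = {r. in_diag \<tau> r c}" using in_diag_phi_rows_other_col[OF c] by simp
  thus ?thesis unfolding mset_col_entries using ent_phi_rows_other_col[OF c] by simp
qed

lemma finite_in_col: "finite {r. in_col r}" by (simp add: in_col_def finite_in_diag)

lemma set_chain_subset: "set chain \<subseteq> {r. in_col r}"
  using chain_in_col by (auto simp: in_set_conv_nth)

lemma mset_col_entries_col_i:
  "mset (col_entries \<tau> i) = image_mset a (mset_set ({r. in_col r} - set chain)) + mset (map a chain)"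
proof -
  have "mset (col_entries \<tau> i) = image_mset a (mset_set {r. in_col r})"
    unfolding mset_col_entries in_col_def a_def ..
  also have "mset_set {r. in_col r} = mset_set ({r. in_col r} - set chain) + mset_set (set chain)"
    by (rule mset_set_Diff_add[OF finite_in_col set_chain_subset])
  finally show ?thesis using mset_set_set[OF distinct_chain] by simp
qed

lemma mset_col_entries_phi_rows_col_i_split:
  "mset (col_entries phi_rows i)
     = image_mset a (mset_set ({r. in_col r} - set chain)) + mset (map new_a (tl chain))"
proof -
  define rest where "rest = {r. in_col r} - set chain"
  have chain_set: "set chain = insert r1 (set (tl chain))" by (subst chain_Cons) simp
  have cells: "{r. in_diag phi_rows r i} = rest \<union> set (tl chain)"
    using in_diag_phi_rows_col_i chain_set set_chain_subset r1_notin_tl_chain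
    by (auto simp: rest_def)
  have fin: "finite rest" using finite_in_col by (simp add: rest_def)
  have rest_a: "image_mset new_a (mset_set rest) = image_mset a (mset_set rest)"
    by (rule image_mset_cong) (use fin chain_set new_a_notin_chain in \<open>auto simp: rest_def\<close>)
  have "mset (col_entries phi_rows i) = image_mset new_a (mset_set (rest \<union> set (tl chain)))"
    unfolding mset_col_entries cells
    by (rule image_mset_cong) (use fin cells ent_phi_rows_col_i in_diag_phi_rows_col_i in auto)
  also have "mset_set (rest \<union> set (tl chain)) = mset_set rest + mset_set (set (tl chain))"
    by (rule mset_set_Union) (use fin chain_set in \<open>auto simp: rest_def\<close>)
  also have "mset_set (set (tl chain)) = mset (tl chain)"
    by (rule mset_set_set) (simp add: distinct_chain distinct_tl)
  finally show ?thesis using rest_a by (simp add: rest_def)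
qed

lemma map_new_a_tl_chain: "map new_a (tl chain) = map a (butlast chain)"
proof (rule nth_equalityI)
  fix j assume "j < length (map new_a (tl chain))"
  hence "Suc j < length chain" by simp
  thus "map new_a (tl chain) ! j = map a (butlast chain) ! j"
    using new_a_chain by (simp add: nth_tl nth_butlast)
qed simp

lemma mset_col_entries_phi_rows_col_i:
  "mset (col_entries phi_rows i) = mset (col_entries \<tau> i) - {#exit_entry#}"
proof -
  have "chain = butlast chain @ [last chain]" using chain_ne by simp
  hence "map a chain = map a (butlast chain) @ [exit_entry]"
    unfolding exit_entry_def by (metis map_append list.simps(8) list.simps(9))
  thus ?thesis
    using mset_col_entries_col_i mset_col_entries_phi_rows_col_i_split map_new_a_tl_chain by simp
qed

lemma col_sorted_phi: "col_sorted (phi (Suc i) \<tau>) c = (if c = i then remove1 exit_entry (col i) else col c)"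
proof -
  have cs0: "col_sorted (phi (Suc i) \<tau>) c = col_sorted phi_rows c" using phi_eq col_sorted_filter_nonempty_rows by simp
  show ?thesis
  proof (cases "c = i")
    case False
    have "sort (col_entries phi_rows c) = sort (col_entries \<tau> c)" 
      by (rule properties_for_sort) (simp_all add: mset_col_entries_phi_rows_other_col[OF False])
    thus ?thesis using cs0 False by (simp add: col_sorted_def)
  next
    case True
    have dist: "distinct (col i)" using col_decreasing[of i] by (metis distinct_col_entries col_sorted_def distinct_rev distinct_sort)
    have rm: "remove1 exit_entry (col i) = filter (\<lambda>y. exit_entry \<noteq> y) (col i)"
      using dist by (simp add: distinct_remove1_removeAll removeAll_filter_not_eq)
    have sg: "sorted_wrt (>) (remove1 exit_entry (col i))" unfolding rm by (rule sorted_wrt_filter) (rule col_decreasing)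
    have srt: "sorted (rev (remove1 exit_entry (col i)))" unfolding sorted_wrt_rev by (rule sorted_wrt_mono_rel[OF _ sg]) simp
    have "sort (col_entries phi_rows i) = rev (remove1 exit_entry (col i))"
    proof (rule properties_for_sort)
      show "mset (rev (remove1 exit_entry (col i))) = mset (col_entries phi_rows i)"
        using mset_col_entries_phi_rows_col_i by (simp add: col_sorted_def)
      show "sorted (rev (remove1 exit_entry (col i)))" by (rule srt)
    qed
    thus ?thesis using cs0 True by (simp add: col_sorted_def)
  qed
qed

subsection \<open>The tableau \<open>tjdt\<^sub>i\<^sub>+\<^sub>1 (\<rho> \<tau>)\<close>\<close>

text \<open>\<open>tjdt\<^sub>i\<^sub>+\<^sub>1 (\<rho> \<tau>)\<close> before its empty row (only possible for \<open>i = 1\<close>) is removed.\<close>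
definition "tjdt_rows = map (\<lambda>p. let row = rho \<tau> ! (p - 1) in
                  if p < Suc exit_pos then row
                  else if p < length (col i) then row[i - 1 := ent (rho \<tau>) (p + 1) i]
                  else if p = length (col i) then take (i - 1) row
                  else row) [1..<n + 1]"

lemma col_len_T: "col_len (rho \<tau>) i = length (col i)"
proof -
  have "{r. in_diag (rho \<tau>) r i} = {1..length (col i)}" using i_pos by (auto simp: in_diag_rho)
  thus ?thesis using col_len_eq_card[of i "rho \<tau>"] i_pos by simp
qed

lemma tjdt_eq: "tjdt (Suc i) (rho \<tau>) = filter (\<lambda>row. row \<noteq> []) tjdt_rows"
  unfolding tjdt_def Let_def diff_Suc_1 tjdt_row_eq col_len_T length_rho tjdt_rows_def n_def by (rule refl)

lemma len_T_row: "1 \<le> p \<Longrightarrow> p \<le> n \<Longrightarrow> 1 \<le> c \<Longrightarrow> c \<le> length (rho \<tau> ! (p - 1)) \<longleftrightarrow> in_diag (rho \<tau>) p c"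
  by (simp add: in_diag_def length_rho n_def)

lemma length_tjdt_rows: "length tjdt_rows = n" by (simp add: tjdt_rows_def)

lemma nth_tjdt_rows: "1 \<le> p \<Longrightarrow> p \<le> n \<Longrightarrow> tjdt_rows ! (p - 1) = (let row = rho \<tau> ! (p - 1) in
                  if p < Suc exit_pos then row
                  else if p < length (col i) then row[i - 1 := ent (rho \<tau>) (p + 1) i]
                  else if p = length (col i) then take (i - 1) row
                  else row)"
proof -
  assume p: "1 \<le> p" "p \<le> n"
  have e: "[1..<n + 1] ! (p - 1) = p" using p by (subst nth_upt) auto
  have l: "p - 1 < length [1..<n + 1]" using p by simp
  show ?thesis unfolding tjdt_rows_def nth_map[OF l] e ..
qed

lemma in_diag_tjdt_rows: "in_diag tjdt_rows r c \<longleftrightarrow> in_diag (rho \<tau>) r c \<and> \<not> (r = length (col i) \<and> c = i)"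
proof (cases "1 \<le> r \<and> r \<le> n \<and> 1 \<le> c")
  case False thus ?thesis by (auto simp: in_diag_def length_tjdt_rows length_rho n_def)
next
  case True
  define row where "row = rho \<tau> ! (r - 1)"
  have rl: "c \<le> length row \<longleftrightarrow> in_diag (rho \<tau>) r c" using len_T_row[of r c] True row_def by simp
  have "length (tjdt_rows ! (r - 1)) = (if r = length (col i) then i - 1 else length row)"
  proof -
    have "r = length (col i) \<Longrightarrow> i \<le> length row"
      using len_T_row[of r i] True i_pos exit_pos by (simp add: in_diag_rho row_def)
    thus ?thesis using nth_tjdt_rows[of r] True exit_pos unfolding row_def[symmetric] by (auto simp: Let_def)
  qed
  moreover have "r = length (col i) \<Longrightarrow> \<not> in_diag (rho \<tau>) r (Suc i)"
    using col_longer by (simp add: in_diag_rho)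
  moreover have "r = length (col i) \<Longrightarrow> in_diag (rho \<tau>) r i"
    using True i_pos by (simp add: in_diag_rho)
  ultimately show ?thesis using True rl
    by (auto simp: in_diag_def length_tjdt_rows n_def)
qed

lemma ent_tjdt_rows:
  "ent tjdt_rows r c = (if in_diag tjdt_rows r c then
     (if c = i \<and> Suc exit_pos \<le> r \<and> r < length (col i) then col i ! r else ent (rho \<tau>) r c) else 0)"
proof (cases "in_diag tjdt_rows r c")
  case True
  hence in_T: "in_diag (rho \<tau>) r c" and not_top: "\<not> (r = length (col i) \<and> c = i)"
    using in_diag_tjdt_rows by auto
  have r: "1 \<le> r" "r \<le> n" "1 \<le> c" using True by (auto simp: in_diag_def length_tjdt_rows)
  define row where "row = rho \<tau> ! (r - 1)"
  have ent_T: "ent (rho \<tau>) r c = row ! (c - 1)" and "c \<le> length row"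
    using in_T by (simp_all add: ent_def row_def in_diag_def)
  have ent_L: "ent tjdt_rows r c = tjdt_rows ! (r - 1) ! (c - 1)"
    and "c \<le> length (tjdt_rows ! (r - 1))"
    using True by (simp_all add: ent_def in_diag_def)
  moreover have "tjdt_rows ! (r - 1) = (if r < Suc exit_pos then row
      else if r < length (col i) then row[i - 1 := ent (rho \<tau>) (r + 1) i]
      else if r = length (col i) then take (i - 1) row else row)"
    using nth_tjdt_rows[OF r(1,2)] unfolding row_def[symmetric] by (simp add: Let_def)
  moreover have "c - 1 = i - 1 \<longleftrightarrow> c = i" using r i_pos by arith
  moreover have "r < length (col i) \<Longrightarrow> ent (rho \<tau>) (r + 1) i = col i ! r"
    using i_pos by (simp add: ent_rho)
  ultimately show ?thesis
    using True not_top ent_T \<open>c \<le> length row\<close> i_pos by (auto simp: nth_take split: if_splits)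
qed simp

lemma length_col_1: "length (col 1) = n"
proof -
  have "{r. in_diag \<tau> r 1} = {1..n}" using in_diag_first_col by (auto simp: in_diag_def n_def)
  thus ?thesis by (simp add: length_col_sorted)
qed

lemma not_in_diag_tjdt_rows_last: "i = 1 \<Longrightarrow> n \<le> r \<Longrightarrow> \<not> in_diag tjdt_rows r c"
proof
  assume i: "i = 1" and r: "n \<le> r" and d: "in_diag tjdt_rows r c"
  have rn: "r = n" using r d by (simp add: in_diag_def length_tjdt_rows)
  have h: "length (col i) = n" using length_col_1 i by simp
  have dT: "in_diag (rho \<tau>) n c" "c \<noteq> i" using d in_diag_tjdt_rows rn h by auto
  hence c2: "Suc i \<le> c" using i by (simp add: in_diag_def)
  have "n \<le> length (col c)" using dT by (simp add: in_diag_rho)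
  moreover have "length (col c) \<le> length (col (Suc i))" using length_col_sorted_antimono[OF _ c2] by simp
  ultimately show False using col_longer h by simp
qed

lemma tjdt_eq_tjdt_rows: "i \<noteq> 1 \<Longrightarrow> tjdt (Suc i) (rho \<tau>) = tjdt_rows"
  unfolding tjdt_eq
proof (rule filter_nonempty_rows_id)
  fix k assume "i \<noteq> 1" "k < length tjdt_rows"
  hence "in_diag tjdt_rows (Suc k) 1"
    using length_col_1 in_diag_tjdt_rows[of "Suc k" 1] by (simp add: in_diag_rho length_tjdt_rows)
  thus "tjdt_rows ! k \<noteq> []" by (auto simp: in_diag_def)
qed

text \<open>For \<open>i = 1\<close> the removed box is the top of the first column, so the last row disappears.\<close>
lemma tjdt_eq_delete_last:
  assumes i: "i = 1"
  shows "tjdt (Suc i) (rho \<tau>) = delete_row n tjdt_rows"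
  unfolding tjdt_eq
proof (rule filter_nonempty_rows_single_empty)
  have col_i: "length (col i) = n" using length_col_1 i by simp
  show n: "1 \<le> n" "n \<le> length tjdt_rows" using r1_row by (auto simp: length_tjdt_rows)
  show "tjdt_rows ! (n - 1) = []"
    using nth_tjdt_rows[of n] n col_i exit_pos i by (simp add: Let_def)
  fix k assume k: "k < length tjdt_rows" "k \<noteq> n - 1"
  hence "in_diag tjdt_rows (Suc k) 1"
    using length_col_1 in_diag_tjdt_rows[of "Suc k" 1] col_i by (auto simp: in_diag_rho length_tjdt_rows)
  thus "tjdt_rows ! k \<noteq> []" by (auto simp: in_diag_def)
qed

lemma length_tjdt: "length (tjdt (Suc i) (rho \<tau>)) = (if i = 1 then n - 1 else n)"
proof (cases "i = 1")
  case True
  show ?thesis unfolding if_P[OF True] tjdt_eq_delete_last[OF True]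
    using length_delete_row[of n tjdt_rows] r1_row by (simp add: length_tjdt_rows)
qed (simp add: tjdt_eq_tjdt_rows length_tjdt_rows)

lemma
  shows in_diag_tjdt: "in_diag (tjdt (Suc i) (rho \<tau>)) r c = in_diag tjdt_rows r c"
    and ent_tjdt: "ent (tjdt (Suc i) (rho \<tau>)) r c = ent tjdt_rows r c"
proof -
  have "in_diag (tjdt (Suc i) (rho \<tau>)) r c = in_diag tjdt_rows r c \<and>
        ent (tjdt (Suc i) (rho \<tau>)) r c = ent tjdt_rows r c"
  proof (cases "i = 1 \<and> 1 \<le> r")
    case True
    have n: "1 \<le> n" "n \<le> length tjdt_rows" using r1_row by (auto simp: length_tjdt_rows)
    have "orig_row n r = r \<or> \<not> in_diag tjdt_rows r c \<and> \<not> in_diag tjdt_rows (orig_row n r) c"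
      using not_in_diag_tjdt_rows_last[of r c] not_in_diag_tjdt_rows_last[of "Suc r" c] True
      by (auto simp: orig_row_def)
    thus ?thesis
      unfolding tjdt_eq_delete_last[OF True[THEN conjunct1]]
      using in_diag_delete_row[OF n True[THEN conjunct2], of c]
        ent_delete_row[OF n True[THEN conjunct2], of c]
      by auto
  qed (auto simp: tjdt_eq_tjdt_rows in_diag_def)
  thus "in_diag (tjdt (Suc i) (rho \<tau>)) r c = in_diag tjdt_rows r c"
    and "ent (tjdt (Suc i) (rho \<tau>)) r c = ent tjdt_rows r c" by simp_all
qed

lemma distinct_col: "distinct (col c)"
  using distinct_col_entries[of c] by (simp add: col_sorted_def)

lemma length_remove1_exit_entry: "length (remove1 exit_entry (col i)) = length (col i) - 1"
  using exit_entry_in_col by (simp add: length_remove1)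

lemma in_diag_rho_phi: "in_diag (rho (phi (Suc i) \<tau>)) r c = in_diag tjdt_rows r c"
  using in_diag_tjdt_rows[of r c] col_sorted_phi[of c] length_remove1_exit_entry
  by (auto simp: in_diag_rho)

lemma ent_rho_phi: "ent (rho (phi (Suc i) \<tau>)) r c = ent tjdt_rows r c"
proof (cases "in_diag tjdt_rows r c")
  case True
  hence r: "1 \<le> r" "1 \<le> c" "r \<le> length (col c)" "\<not> (r = length (col i) \<and> c = i)"
    using in_diag_tjdt_rows[of r c] by (auto simp: in_diag_rho)
  have "ent (rho (phi (Suc i) \<tau>)) r c = col_sorted (phi (Suc i) \<tau>) c ! (r - 1)"
    using True in_diag_rho_phi[of r c] ent_rho[of "phi (Suc i) \<tau>" r c] in_diag_rho[of "phi (Suc i) \<tau>" r c]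
    by simp
  also have "\<dots> = (if c = i \<and> Suc exit_pos \<le> r \<and> r < length (col i) then col i ! r
                   else ent (rho \<tau>) r c)"
  proof (cases "c = i")
    case True
    have r': "r - 1 < length (col i) - 1" using r True by auto
    have "remove1 exit_entry (col i) ! (r - 1)
        = (if r - 1 < exit_pos then col i ! (r - 1) else col i ! Suc (r - 1))"
      using nth_remove1[OF distinct_col exit_pos[THEN conjunct1] r'] exit_pos by simp
    thus ?thesis using True col_sorted_phi[of c] r r' by (auto simp: ent_rho)
  qed (use col_sorted_phi[of c] r in \<open>simp add: ent_rho\<close>)
  also have "\<dots> = ent tjdt_rows r c" using ent_tjdt_rows True by simp
  finally show ?thesis .
qed (use in_diag_rho_phi[of r c] in simp)

lemma rho_phi: "rho (phi (Suc i) \<tau>) = tjdt (Suc i) (rho \<tau>)"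
  by (rule tableau_eqI)
    (simp_all add: length_tjdt length_phi length_rho in_diag_rho_phi ent_rho_phi in_diag_tjdt ent_tjdt)

end

theorem theorem6p20:
  fixes T \<tau> :: tableau and i :: nat
  assumes "1 \<le> i"
    and "is_SSRT T"
    and "has_addable_in_col T (i + 1)"
    and "is_SSRCT \<tau>"
    and "rho \<tau> = T"
  shows "is_SSRCT (phi (i + 1) \<tau>) \<and> rho (phi (i + 1) \<tau>) = tjdt (i + 1) T"
proof -
  obtain r where "addable_node (rho \<tau>) r (Suc i)"
    using assms(3,5) by (auto simp: has_addable_in_col_def)
  hence "r \<le> length (col_sorted \<tau> i)" "\<not> r \<le> length (col_sorted \<tau> (Suc i))"
    using assms(1) by (auto simp: addable_node_def in_diag_rho)
  then interpret phi_setting \<tau> i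
    using assms(1,4) by unfold_locales simp_all
  show ?thesis using SSRCT_phi rho_phi assms(5) by simp
qed

end
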